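(* Let $L\ge 2$ and $N_{\mathrm{em}}\ge 1$ be integers and $p_{\mathrm{src}}\in[0,1]$. Let $(\bm{v},N,m^N,u^N,x^N)$ be random variables as described in the context, satisfying conditions (A), (B) and (C) of the context. Let $\bm{\nu}=\{\nu_M: M\in\mathcal{M}\}$ be non-negative real constants with $\nu_M=0$ for all $M<Lp_{\mathrm{src}}$. Let $\bm{\xi}=\{\xi_{M,U}: (M,U)\in\mathcal{M}\times\mathcal{U},\ 0\le c(M,U)\le 1\}$ be real constants with $|\xi_{M,U}|\le 1$. Let $\eta_1,\delta_1\ge 0$ satisfy $$\max_{Q\in\mathcal{P}_{\mathcal{M}}:\ \mathbb{E}_{M\sim Q}[\nu_M]\ge \mathbb{E}_{M\sim\mathfrak{b}}[\nu_M]+\delta_1} 2^{-N_{\mathrm{em}}D(Q\|\mathfrak{b})}\le \eta_1,\qquad \mathfrak{b}:=\mathfrak{b}_{L,p_{\mathrm{src}}}.$$ Let $\eta_2\ge 0$ and non-negative numbers $\{\delta_2(N)\}_{N=1,2,\dots}$ satisfy $\exp[-N\delta_2(N)]\le\eta_2$ for all $N\ge1$. Let $H_{PA}(N)$ be a function of $N$ such that for every $N\ge 1$ $$\max_{P\in\mathcal{E}_N} H(X|Y)_{P_{\mathcal{X}\times\mathcal{Y}}}\le H_{PA}(N),$$ where $\mathcal{E}_N:=\mathcal{P}^{N,\bm{\nu},\delta_1}\cap\mathcal{P}^{\bm{\xi},\delta_2(N)}$ (sets defined in the context). Then there exist sets $T(N,y^N)\subseteq\{0,1\}^N$, defined for every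 $N\ge1$ and $y^N\in\mathcal{Y}^N$, such that $$\Pr\{N\ge 1,\ x^N\notin T(N,y^N)\}\le \eta_1+\eta_2,$$ where $y^N=(y_1,\dots,y_N)$ with $y_k:=f_{\mathcal{Y}}(m_k,u_k,x_k)$, and $$\log_2|T(N,y^N)|\le N H_{PA}(N)\quad\text{for all } N\ge1 \text{ and all } y^N\in\mathcal{Y}^N.$$
   Context: For a finite set $\Omega$, $\mathcal{P}_\Omega$ denotes the set of probability mass functions on $\Omega$; for $\omega^n=(\omega_1,\dots,\omega_n)\in\Omega^n$ the type $\tilde P_{\omega^n}\in\mathcal{P}_\Omega$ is $\tilde P_{\omega^n}(\omega)=\frac1n|\{i:\omega_i=\omega\}|$ (for several sequences, $\tilde P_{m^N,u^N,x^N}$ is the type of the sequence of triples $(m_k,u_k,x_k)$). Let $\mathcal{M}=\{0,\dots,L\}$, $\mathcal{U}=\mathcal{X}=\{0,1\}$, $\mathcal{Y}=\{(a,b): a\in\{0,\dots,L-2\},\ b\in\{0,1\}\}$, and $\mathcal{W}=\{(M,U,X)\in\mathcal{M}\times\mathcal{U}\times\mathcal{X}: 0\le M-U-X\le L-2\}$. Let $f_{\mathcal{Y}}(M,U,X):=(M-U-X,\ U\oplus X)$ with $\oplus$ addition mod 2. For $P\in\mathcal{P}_{\mathcal{W}}$, $P_{\mathcal{M}}$, $P_{\mathcal{M}\times\mathcal{U}}$, $P_{\mathcal{X}\times\mathcal{Y}}$ are the distributions of $M$, of $(M,U)$, and of $(X,f_{\mathcal{Y}}(M,U,X))$ when $(M,U,X)\sim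 P$; $H(X|Y)_{P_{\mathcal{X}\times\mathcal{Y}}}$ is the conditional Shannon entropy (base 2) under that joint distribution. $c(M,U):=(M-U)/(L-1)$. $\mathfrak{b}_{L,p}(M):=\binom{L}{M}p^M(1-p)^{L-M}$. $D(\cdot\|\cdot)$ is the Kullback–Leibler divergence (base 2). Random variables: on a common probability space (probability $\Pr$), $\bm{v}=(v_0,\dots,v_L)$ are non-negative integers with $\sum_M v_M=N_{\mathrm{em}}$, $N$ is a non-negative integer, and when $N\ge1$, $m^N\in\mathcal{M}^N$, $u^N\in\mathcal{U}^N$, $x^N\in\mathcal{X}^N$ with $(m_k,u_k,x_k)\in\mathcal{W}$ for all $k$. (A) There is $p_{\mathrm{odd}}\le p_{\mathrm{src}}$ with $\Pr\{\bm{v}\}=\frac{N_{\mathrm{em}}!}{\prod_{M=0}^L v_M!}\prod_{M=0}^L(\mathfrak{b}_{L,p_{\mathrm{odd}}}(M))^{v_M}$. (B) For all $M\in\mathcal{M}$, $\Pr\{N\tilde P_{m^N}(M)\le v_M\mid N\ge1\}=1$. (C) For $N\ge 1$, $\Pr\{x^N\mid N,m^N,u^N\}=\prod_{k=1}^N[c(m_k,u_k)]^{x_k}[1-c(m_k,u_k)]^{1-x_k}$. Sets: $\mathcal{P}^{N,\bm{\nu},\delta_1}:=\{P\in\mathcal{P}_{\mathcal{W}}: \mathbb{E}_{M\sim P_{\mathcal{M}}}[\nu_M]\le \frac{N_{\mathrm{em}}}{N}(\mathbb{E}_{M\sim\mathfrak{b}_{L,p_{\mathrm{src}}}}[\nu_M]+\delta_1)\}$,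 and $\mathcal{P}^{\bm{\xi},\delta_2}:=\{P\in\mathcal{P}_{\mathcal{W}}: \mathbb{E}_{(M,U,X)\sim P}[(X-c(M,U))\xi_{M,U}]\le \frac{\delta_2}{3}+[(\frac{\delta_2}{3})^2+2\delta_2\,\mathbb{E}_{(M,U)\sim P_{\mathcal{M}\times\mathcal{U}}}[c(M,U)(1-c(M,U))\xi_{M,U}^2]]^{1/2}\}$. *)

theory Defs
  imports "HOL-Probability.Probability"
begin

definition W_set :: "nat \<Rightarrow> (nat \<times> nat \<times> nat) set" where
  "W_set L = {(M, U, X). M \<le> L \<and> U \<le> 1 \<and> X \<le> 1 \<and> U + X \<le> M \<and> M - U - X \<le> L - 2}"

definition Y_set :: "nat \<Rightarrow> (nat \<times> nat) set" where
  "Y_set L = {(a, b). a \<le> L - 2 \<and> b \<le> 1}"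

text \<open>f_Y(M,U,X) = (M - U - X, U xor X) (subtraction is exact on W).\<close>
definition fY :: "nat \<times> nat \<times> nat \<Rightarrow> nat \<times> nat" where
  "fY w = (case w of (M, U, X) \<Rightarrow> (M - U - X, (U + X) mod 2))"

definition cMU :: "nat \<Rightarrow> nat \<Rightarrow> nat \<Rightarrow> real" where
  "cMU L M U = (real M - real U) / (real L - 1)"

definition binom_pmf :: "nat \<Rightarrow> real \<Rightarrow> nat \<Rightarrow> real" where
  "binom_pmf L p M = real (L choose M) * p ^ M * (1 - p) ^ (L - M)"

definition is_pmf_on :: "'b set \<Rightarrow> ('b \<Rightarrow> real) \<Rightarrow> bool" where
  "is_pmf_on S P \<longleftrightarrow> (\<forall>w. 0 \<le> P w) \<and> (\<forall>w. w \<notin> S \<longrightarrow> P w = 0) \<and> (\<Sum>w\<in>S. P w) = 1"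

definition marg_M :: "nat \<Rightarrow> (nat \<times> nat \<times> nat \<Rightarrow> real) \<Rightarrow> nat \<Rightarrow> real" where
  "marg_M L P M = (\<Sum>w\<in>{w \<in> W_set L. fst w = M}. P w)"

definition marg_MU :: "nat \<Rightarrow> (nat \<times> nat \<times> nat \<Rightarrow> real) \<Rightarrow> nat \<Rightarrow> nat \<Rightarrow> real" where
  "marg_MU L P M U = (\<Sum>w\<in>{w \<in> W_set L. fst w = M \<and> fst (snd w) = U}. P w)"

definition marg_XY :: "nat \<Rightarrow> (nat \<times> nat \<times> nat \<Rightarrow> real) \<Rightarrow> nat \<Rightarrow> nat \<times> nat \<Rightarrow> real" where
  "marg_XY L P X y = (\<Sum>w\<in>{w \<in> W_set L. snd (snd w) = X \<and> fY w = y}. P w)"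

definition marg_Y :: "nat \<Rightarrow> (nat \<times> nat \<times> nat \<Rightarrow> real) \<Rightarrow> nat \<times> nat \<Rightarrow> real" where
  "marg_Y L P y = (\<Sum>X\<in>{0,1}. marg_XY L P X y)"

definition cond_entropy_XY :: "nat \<Rightarrow> (nat \<times> nat \<times> nat \<Rightarrow> real) \<Rightarrow> real" where
  "cond_entropy_XY L P =
     (\<Sum>X\<in>{0::nat,1}. \<Sum>y\<in>Y_set L.
        (if marg_XY L P X y = 0 then 0
         else - marg_XY L P X y * log 2 (marg_XY L P X y / marg_Y L P y)))"

text \<open>KL divergence (base 2) of Q from B on {0..L}, for Q absolutely continuous w.r.t. B.\<close>
definition KL2 :: "nat \<Rightarrow> (nat \<Rightarrow> real) \<Rightarrow> (nat \<Rightarrow> real) \<Rightarrow> real" where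
  "KL2 L Q B = (\<Sum>M\<in>{0..L}. if Q M = 0 then 0 else Q M * log 2 (Q M / B M))"

definition Pset1 :: "nat \<Rightarrow> nat \<Rightarrow> real \<Rightarrow> nat \<Rightarrow> (nat \<Rightarrow> real) \<Rightarrow> real
                     \<Rightarrow> (nat \<times> nat \<times> nat \<Rightarrow> real) set" where
  "Pset1 L Nem psrc N nu \<delta>1 =
     {P. is_pmf_on (W_set L) P \<and>
         (\<Sum>M\<in>{0..L}. marg_M L P M * nu M)
           \<le> real Nem / real N * ((\<Sum>M\<in>{0..L}. binom_pmf L psrc M * nu M) + \<delta>1)}"

definition Pset2 :: "nat \<Rightarrow> (nat \<Rightarrow> nat \<Rightarrow> real) \<Rightarrow> real \<Rightarrow> (nat \<times> nat \<times> nat \<Rightarrow> real) set" where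
  "Pset2 L xi \<delta>2 =
     {P. is_pmf_on (W_set L) P \<and>
         (\<Sum>w\<in>W_set L. case w of (M, U, X) \<Rightarrow> P w * ((real X - cMU L M U) * xi M U))
           \<le> \<delta>2 / 3 + sqrt ((\<delta>2 / 3)\<^sup>2 + 2 * \<delta>2 *
               (\<Sum>(M, U)\<in>{0..L} \<times> {0..1}.
                  marg_MU L P M U * (cMU L M U * (1 - cMU L M U) * (xi M U)\<^sup>2)))}"

definition yseq :: "nat list \<Rightarrow> nat list \<Rightarrow> nat list \<Rightarrow> (nat \<times> nat) list" where
  "yseq ms us xs = map fY (zip ms (zip us xs))"

definition occ :: "nat list \<Rightarrow> nat \<Rightarrow> nat" where
  "occ ms M = length (filter (\<lambda>a. a = M) ms)"

end

theory Submission
  imports Defs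
begin

(* Let E_N = P^{N,nu,delta1} \<inter> P^{xi,delta2(N)} and let T(N, y^N) consist of the words x^N that
   complete y^N to a sequence of triples (m_k, u_k, x_k) in W whose type lies in E_N.  Both sets
   are convex, so the average of these types lies in E_N as well; the product of the conditional
   probabilities P(x_k | y_k) of that average is a sub-probability on T(N, y^N) whose
   log-likelihood is -N H(X|Y) at every word of T, whence log |T| <= N H(X|Y) <= N H_PA(N).

   If x^N is not in T(N, y^N), the type of the observed triples leaves E_N.  Leaving
   P^{N,nu,delta1} forces sum_M v_M nu_M > N_em (E_b nu + delta1) by (B); under the multinomial
   law (A) a Chernoff bound, whose exponent is attained as 2^(-N_em D(Q||b)) by an exponential
   tilt Q of b, bounds this by eta1, since p_odd <= p_src and nu vanishes below L p_src.  Leaving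
   P^{xi,delta2(N)} is, given (N, m^N, u^N), a deviation of a sum of independent Bernoulli
   variables by (C), and Bernstein's inequality bounds it by exp(-N delta2(N)) <= eta2. *)

section \<open>Bernstein's inequality for weighted Bernoulli sums\<close>

lemma two_mult_three_power_le_fact: "2 * 3 ^ k \<le> (fact (k + 2) :: real)"
proof (induction k)
  case (Suc k)
  have "(2::real) * 3 ^ Suc k = 3 * (2 * 3 ^ k)" by simp
  also have "\<dots> \<le> (real k + 3) * fact (k + 2)"
    using Suc.IH by (intro mult_mono) auto
  also have "\<dots> = fact (Suc k + 2)"
    by (simp add: algebra_simps)
  finally show ?case .
qed simp

lemma exp_mult_le_Bernstein:
  fixes z s :: real
  assumes "\<bar>z\<bar> \<le> 1" and "0 \<le> s" and "s < 3"
  shows "exp (s * z) \<le> 1 + s * z + z\<^sup>2 * (s\<^sup>2 / (2 * (1 - s / 3)))"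
proof -
  let ?f = "\<lambda>n. (s * z) ^ n / fact n"
  have "?f sums exp (s * z)"
    using exp_converges[of "s * z"] by (simp add: divide_inverse mult.commute)
  then have "?f sums ((exp (s * z) - 1 - s * z) + (\<Sum>i<2. ?f i))"
    by (simp add: numeral_2_eq_2)
  then have tail: "(\<lambda>i. ?f (i + 2)) sums (exp (s * z) - 1 - s * z)"
    using sums_iff_shift[of ?f 2] by blast
  have geom: "(\<lambda>i. z\<^sup>2 * (s\<^sup>2 / 2) * (s / 3) ^ i) sums (z\<^sup>2 * (s\<^sup>2 / 2) * (1 / (1 - s / 3)))"
    using sums_mult[OF geometric_sums, of "s / 3" "z\<^sup>2 * (s\<^sup>2 / 2)"] assms by simp
  have "?f (i + 2) \<le> z\<^sup>2 * (s\<^sup>2 / 2) * (s / 3) ^ i" for i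
  proof -
    have "?f (i + 2) \<le> \<bar>s * z\<bar> ^ (i + 2) / fact (i + 2)"
      by (intro divide_right_mono) (metis abs_ge_self power_abs, simp)
    also have "\<bar>s * z\<bar> ^ (i + 2) = s ^ (i + 2) * (z\<^sup>2 * \<bar>z\<bar> ^ i)"
      using assms(2) by (simp add: abs_mult power_mult_distrib power_add power2_eq_square)
    also have "\<dots> \<le> s ^ (i + 2) * z\<^sup>2"
      using assms(1,2) by (intro mult_left_mono mult_right_le_one_le) (auto simp: power_le_one)
    also have "s ^ (i + 2) * z\<^sup>2 / fact (i + 2) \<le> s ^ (i + 2) * z\<^sup>2 / (2 * 3 ^ i)"
      using two_mult_three_power_le_fact[of i] assms(2) by (intro divide_left_mono) auto
    also have "\<dots> = z\<^sup>2 * (s\<^sup>2 / 2) * (s / 3) ^ i"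
      by (simp add: power_add field_simps power2_eq_square)
    finally show ?thesis by (simp add: divide_right_mono)
  qed
  from sums_le[OF this tail geom] show ?thesis by simp
qed

definition binary_words :: "nat \<Rightarrow> nat list set" where
  "binary_words n = {xs. length xs = n \<and> set xs \<subseteq> {0, 1}}"

lemma finite_binary_words: "finite (binary_words n)"
  using finite_lists_length_eq[of "{0, 1 :: nat}" n] by (simp add: binary_words_def conj_commute)

lemma binary_words_nth: "xs \<in> binary_words n \<Longrightarrow> k < n \<Longrightarrow> xs ! k \<in> {0, 1}"
  unfolding binary_words_def using nth_mem by blast

lemma binary_words_Suc: "binary_words (Suc n) = (\<lambda>(a, xs). a # xs) ` ({0, 1} \<times> binary_words n)"
proof (intro set_eqI iffI)
  fix ys assume "ys \<in> binary_words (Suc n)"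
  then obtain a xs where "ys = a # xs" "a \<in> {0, 1}" "xs \<in> binary_words n"
    unfolding binary_words_def by (cases ys) auto
  then show "ys \<in> (\<lambda>(a, xs). a # xs) ` ({0, 1} \<times> binary_words n)" by force
qed (auto simp: binary_words_def)

lemma sum_prod_binary_words:
  fixes f :: "nat \<Rightarrow> nat \<Rightarrow> 'a :: comm_semiring_1"
  shows "(\<Sum>xs\<in>binary_words n. \<Prod>k<n. f k (xs ! k)) = (\<Prod>k<n. f k 0 + f k 1)"
proof (induction n arbitrary: f)
  case 0
  have "binary_words 0 = {[]}" by (auto simp: binary_words_def)
  then show ?case by simp
next
  case (Suc n)
  have inj: "inj_on (\<lambda>(a, xs). a # xs) ({0 :: nat, 1} \<times> binary_words n)"
    by (auto simp: inj_on_def)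
  have "(\<Sum>xs\<in>binary_words (Suc n). \<Prod>k<Suc n. f k (xs ! k))
      = (\<Sum>(a, xs)\<in>{0, 1} \<times> binary_words n. f 0 a * (\<Prod>k<n. f (Suc k) (xs ! k)))"
    unfolding binary_words_Suc sum.reindex[OF inj] prod.lessThan_Suc_shift
    by (intro sum.cong refl) auto
  also have "\<dots> = (\<Sum>a\<in>{0, 1}. f 0 a * (\<Prod>k<n. f (Suc k) 0 + f (Suc k) 1))"
    using Suc.IH[of "\<lambda>k. f (Suc k)"]
    by (simp add: sum.cartesian_product[symmetric] sum_distrib_left[symmetric])
  also have "\<dots> = (\<Prod>k<Suc n. f k 0 + f k 1)"
    by (simp only: prod.lessThan_Suc_shift) (simp add: algebra_simps)
  finally show ?case .
qed

definition bernoulli_weight :: "real \<Rightarrow> nat \<Rightarrow> real" where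
  "bernoulli_weight c a = c ^ a * (1 - c) ^ (1 - a)"

lemma bernoulli_weight_simps [simp]:
  "bernoulli_weight c 0 = 1 - c" "bernoulli_weight c 1 = c" "bernoulli_weight c (Suc 0) = c"
  by (auto simp: bernoulli_weight_def)

lemma bernoulli_mgf_le_exp:
  fixes c \<xi> s :: real
  assumes c: "0 \<le> c" "c \<le> 1" and \<xi>: "\<bar>\<xi>\<bar> \<le> 1" and s: "0 \<le> s" "s < 3"
  defines "\<psi> \<equiv> s\<^sup>2 / (2 * (1 - s / 3))"
  shows "(1 - c) * exp (s * ((0 - c) * \<xi>)) + c * exp (s * ((1 - c) * \<xi>))
           \<le> exp (c * (1 - c) * \<xi>\<^sup>2 * \<psi>)"
proof -
  have "\<bar>(0 - c) * \<xi>\<bar> \<le> 1" "\<bar>(1 - c) * \<xi>\<bar> \<le> 1"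
    using c \<xi> by (auto simp: abs_mult intro: mult_le_one)
  from this[THEN exp_mult_le_Bernstein[OF _ s]]
  have "(1 - c) * exp (s * ((0 - c) * \<xi>)) + c * exp (s * ((1 - c) * \<xi>))
      \<le> (1 - c) * (1 + s * ((0 - c) * \<xi>) + ((0 - c) * \<xi>)\<^sup>2 * \<psi>)
        + c * (1 + s * ((1 - c) * \<xi>) + ((1 - c) * \<xi>)\<^sup>2 * \<psi>)"
    unfolding \<psi>_def using c by (intro add_mono mult_left_mono) auto
  also have "\<dots> = 1 + c * (1 - c) * \<xi>\<^sup>2 * \<psi>"
    by (simp add: algebra_simps power2_eq_square)
  also have "\<dots> \<le> exp (c * (1 - c) * \<xi>\<^sup>2 * \<psi>)"
    by (rule exp_ge_add_one_self)
  finally show ?thesis .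
qed

lemma bernoulli_tail_le_exp:
  fixes c \<xi> :: "nat \<Rightarrow> real" and s a :: real
  assumes c\<xi>: "\<forall>k<n. 0 \<le> c k \<and> c k \<le> 1 \<and> \<bar>\<xi> k\<bar> \<le> 1" and s: "0 \<le> s" "s < 3"
  shows "(\<Sum>xs\<in>{xs\<in>binary_words n. n * a < (\<Sum>k<n. (real (xs ! k) - c k) * \<xi> k)}.
            \<Prod>k<n. bernoulli_weight (c k) (xs ! k))
         \<le> exp (s\<^sup>2 / (2 * (1 - s / 3)) * (\<Sum>k<n. c k * (1 - c k) * (\<xi> k)\<^sup>2) - s * n * a)"
proof -
  define \<psi> where "\<psi> = s\<^sup>2 / (2 * (1 - s / 3))"
  define Z where "Z xs = (\<Sum>k<n. (real (xs ! k) - c k) * \<xi> k)" for xs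
  define p where "p xs = (\<Prod>k<n. bernoulli_weight (c k) (xs ! k))" for xs
  define f where "f k a = bernoulli_weight (c k) a * exp (s * ((real a - c k) * \<xi> k))" for k a
  have p_nonneg: "0 \<le> p xs" if "xs \<in> binary_words n" for xs
    unfolding p_def using c\<xi> binary_words_nth[OF that] by (intro prod_nonneg) fastforce
  have p_exp: "p xs * exp (s * (Z xs - n * a)) = exp (- s * n * a) * (\<Prod>k<n. f k (xs ! k))" for xs
  proof -
    have "s * (Z xs - n * a) = (\<Sum>k<n. s * ((real (xs ! k) - c k) * \<xi> k)) + - s * n * a"
      by (simp add: Z_def sum_distrib_left algebra_simps)
    then have "exp (s * (Z xs - n * a))
        = (\<Prod>k<n. exp (s * ((real (xs ! k) - c k) * \<xi> k))) * exp (- s * n * a)"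
      by (simp only: exp_add exp_sum[OF finite_lessThan])
    then show ?thesis
      by (simp add: p_def f_def prod.distrib)
  qed
  \<comment> \<open>Markov's inequality for the exponential moment\<close>
  have "(\<Sum>xs\<in>{xs\<in>binary_words n. n * a < Z xs}. p xs)
      \<le> (\<Sum>xs\<in>{xs\<in>binary_words n. n * a < Z xs}. p xs * exp (s * (Z xs - n * a)))"
  proof (intro sum_mono)
    fix xs assume "xs \<in> {xs\<in>binary_words n. n * a < Z xs}"
    then have "0 \<le> p xs" "1 \<le> exp (s * (Z xs - n * a))"
      using p_nonneg s by auto
    then show "p xs \<le> p xs * exp (s * (Z xs - n * a))"
      by (simp add: mult_le_cancel_left1)
  qed
  also have "\<dots> \<le> (\<Sum>xs\<in>binary_words n. p xs * exp (s * (Z xs - n * a)))"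
    using p_nonneg by (intro sum_mono2 finite_binary_words) auto
  also have "\<dots> = exp (- s * n * a) * (\<Prod>k<n. f k 0 + f k 1)"
    by (simp add: p_exp sum_distrib_left[symmetric] sum_prod_binary_words)
  also have "\<dots> \<le> exp (- s * n * a) * (\<Prod>k<n. exp (c k * (1 - c k) * (\<xi> k)\<^sup>2 * \<psi>))"
    using c\<xi> bernoulli_mgf_le_exp[OF _ _ _ s]
    by (intro mult_left_mono prod_mono) (auto simp: f_def \<psi>_def)
  also have "\<dots> = exp (- s * n * a) * exp (\<psi> * (\<Sum>k<n. c k * (1 - c k) * (\<xi> k)\<^sup>2))"
    by (simp add: exp_sum[OF finite_lessThan, symmetric] sum_distrib_left mult_ac)
  also have "\<dots> = exp (\<psi> * (\<Sum>k<n. c k * (1 - c k) * (\<xi> k)\<^sup>2) - s * n * a)"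
    by (simp add: exp_add[symmetric])
  finally show ?thesis unfolding p_def Z_def \<psi>_def .
qed

lemma Bernstein_exponent_at_optimum:
  fixes V r :: real
  assumes "0 < V" "0 < r"
  shows "0 \<le> r / (V + r / 3)" "r / (V + r / 3) < 3"
    "(r / (V + r / 3))\<^sup>2 / (2 * (1 - r / (V + r / 3) / 3)) * V - r / (V + r / 3) * r
       = - r\<^sup>2 / (2 * (V + r / 3))"
proof -
  define D where "D = V + r / 3"
  have D: "0 < D" "V < D"
    using assms by (simp_all add: D_def)
  show "0 \<le> r / (V + r / 3)" "r / (V + r / 3) < 3"
    using assms D by (simp_all add: D_def[symmetric] field_simps) (simp add: D_def)
  have om: "1 - r / D / 3 = V / D"
    using D by (simp add: D_def field_simps)
  have "(r / D)\<^sup>2 / (2 * (1 - r / D / 3)) * V = r\<^sup>2 / (2 * D)"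
    unfolding om using D assms by (simp add: field_simps power2_eq_square)
  then show "(r / (V + r / 3))\<^sup>2 / (2 * (1 - r / (V + r / 3) / 3)) * V - r / (V + r / 3) * r
      = - r\<^sup>2 / (2 * (V + r / 3))"
    using D unfolding D_def[symmetric] by (simp add: field_simps power2_eq_square)
qed

lemma Bernstein_exponent:
  fixes \<delta> V :: real
  assumes "0 \<le> \<delta>" and "0 \<le> V"
  obtains s where "0 \<le> s" "s < 3"
    "s\<^sup>2 / (2 * (1 - s / 3)) * V - s * (\<delta> / 3 + sqrt ((\<delta> / 3)\<^sup>2 + 2 * \<delta> * V)) \<le> - \<delta>"
proof -
  define r where "r = \<delta> / 3 + sqrt ((\<delta> / 3)\<^sup>2 + 2 * \<delta> * V)"
  have "sqrt ((\<delta> / 3)\<^sup>2) \<le> sqrt ((\<delta> / 3)\<^sup>2 + 2 * \<delta> * V)"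
    using assms by (intro real_sqrt_le_mono) simp
  then have r: "2 * \<delta> / 3 \<le> r"
    using assms(1) by (simp add: r_def)
  \<comment> \<open>\<open>r\<close> is the positive root of \<open>r\<^sup>2 = 2 \<delta> (V + r / 3)\<close>\<close>
  have r_sq: "r\<^sup>2 = 2 * \<delta> * (V + r / 3)"
  proof -
    have "(r - \<delta> / 3)\<^sup>2 = (\<delta> / 3)\<^sup>2 + 2 * \<delta> * V"
      using assms by (simp add: r_def)
    then show ?thesis
      by (simp add: power2_eq_square algebra_simps)
  qed
  consider "\<delta> = 0" | "0 < \<delta>" "V = 0" | "0 < \<delta>" "0 < V"
    using assms by linarith
  then show thesis
  proof cases
    case 1
    then show thesis using that[of 0] by simp
  next
    case 2
    then show thesis using that[of "3 / 2"] r by (simp add: r_def)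
  next
    case 3
    then have "0 < r" "0 < V + r / 3"
      using r by auto
    then have "- r\<^sup>2 / (2 * (V + r / 3)) = - \<delta>"
      unfolding r_sq by (simp add: field_simps)
    then show thesis
      using Bernstein_exponent_at_optimum[OF 3(2) \<open>0 < r\<close>] that[of "r / (V + r / 3)"]
      unfolding r_def by simp
  qed
qed

lemma bernoulli_Bernstein_tail:
  fixes c \<xi> :: "nat \<Rightarrow> real" and \<delta> :: real
  assumes c\<xi>: "\<forall>k<n. 0 \<le> c k \<and> c k \<le> 1 \<and> \<bar>\<xi> k\<bar> \<le> 1" and \<delta>: "0 \<le> \<delta>"
  defines "V \<equiv> (\<Sum>k<n. c k * (1 - c k) * (\<xi> k)\<^sup>2) / n"
  shows "(\<Sum>xs\<in>{xs\<in>binary_words n.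
             n * (\<delta> / 3 + sqrt ((\<delta> / 3)\<^sup>2 + 2 * \<delta> * V)) < (\<Sum>k<n. (real (xs ! k) - c k) * \<xi> k)}.
            \<Prod>k<n. bernoulli_weight (c k) (xs ! k))
         \<le> exp (- real n * \<delta>)"
proof -
  have "0 \<le> V"
    unfolding V_def using c\<xi> by (intro divide_nonneg_nonneg sum_nonneg) auto
  then obtain s where s: "0 \<le> s" "s < 3"
    and exponent: "s\<^sup>2 / (2 * (1 - s / 3)) * V - s * (\<delta> / 3 + sqrt ((\<delta> / 3)\<^sup>2 + 2 * \<delta> * V)) \<le> - \<delta>"
    using Bernstein_exponent \<delta> by blast
  let ?thr = "\<delta> / 3 + sqrt ((\<delta> / 3)\<^sup>2 + 2 * \<delta> * V)"
  have S: "(\<Sum>k<n. c k * (1 - c k) * (\<xi> k)\<^sup>2) = n * V"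
    by (cases "n = 0") (simp_all add: V_def)
  have "(\<Sum>xs\<in>{xs\<in>binary_words n. n * ?thr < (\<Sum>k<n. (real (xs ! k) - c k) * \<xi> k)}.
            \<Prod>k<n. bernoulli_weight (c k) (xs ! k))
      \<le> exp (s\<^sup>2 / (2 * (1 - s / 3)) * (n * V) - s * n * ?thr)"
    using bernoulli_tail_le_exp[OF c\<xi> s, of ?thr] unfolding S .
  also have "\<dots> \<le> exp (- real n * \<delta>)"
    using mult_left_mono[OF exponent, of n] by (simp add: algebra_simps)
  finally show ?thesis .
qed

section \<open>Types of sequences of triples and their mixtures\<close>

lemma finite_W_set: "finite (W_set L)"
  by (rule finite_subset[of _ "{0..L} \<times> {0..1} \<times> {0..1}"]) (auto simp: W_set_def)

lemma finite_Y_set: "finite (Y_set L)"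
  by (rule finite_subset[of _ "{0..L - 2} \<times> {0..1}"]) (auto simp: Y_set_def)

lemma fY_in_Y_set: "w \<in> W_set L \<Longrightarrow> fY w \<in> Y_set L"
  by (auto simp: W_set_def Y_set_def fY_def split: prod.splits)

lemma cMU_bounds:
  assumes "L \<ge> 2" and "(M, U, X) \<in> W_set L"
  shows "0 \<le> cMU L M U" and "cMU L M U \<le> 1"
proof -
  have "real U \<le> real M" "real M - real U \<le> real L - 1" "0 < real L - 1"
    using assms by (auto simp: W_set_def)
  then show "0 \<le> cMU L M U" "cMU L M U \<le> 1"
    by (simp_all add: cMU_def)
qed

lemma sum_marg_M: "(\<Sum>M\<in>{0..L}. marg_M L P M * h M) = (\<Sum>w\<in>W_set L. P w * h (fst w))"
proof -
  have "(\<Sum>M\<in>{0..L}. marg_M L P M * h M) = (\<Sum>M\<in>{0..L}. \<Sum>w\<in>{w \<in> W_set L. fst w = M}. P w * h (fst w))"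
    unfolding marg_M_def sum_distrib_right by (intro sum.cong refl) simp
  also have "\<dots> = (\<Sum>w\<in>W_set L. P w * h (fst w))"
    by (rule sum.group[OF finite_W_set]) (auto simp: W_set_def)
  finally show ?thesis .
qed

lemma sum_marg_MU:
  "(\<Sum>(M, U)\<in>{0..L} \<times> {0..1}. marg_MU L P M U * g M U) = (\<Sum>w\<in>W_set L. P w * g (fst w) (fst (snd w)))"
proof -
  have "(\<Sum>(M, U)\<in>{0..L} \<times> {0..1}. marg_MU L P M U * g M U)
      = (\<Sum>p\<in>{0..L} \<times> {0..1}. \<Sum>w\<in>{w \<in> W_set L. (fst w, fst (snd w)) = p}. P w * g (fst w) (fst (snd w)))"
    unfolding marg_MU_def sum_distrib_right by (intro sum.cong refl) (auto intro!: sum.cong)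
  also have "\<dots> = (\<Sum>w\<in>W_set L. P w * g (fst w) (fst (snd w)))"
    by (rule sum.group[OF finite_W_set]) (auto simp: W_set_def)
  finally show ?thesis .
qed

lemma marg_XY_eq_sum:
  "marg_XY L P X y = (\<Sum>w\<in>W_set L. P w * (if snd (snd w) = X \<and> fY w = y then 1 else 0))"
  unfolding marg_XY_def
  by (simp add: sum.inter_filter[OF finite_W_set, symmetric] if_distrib cong: if_cong)

text \<open>A sequence of triples \<open>(m\<^sub>k, u\<^sub>k, x\<^sub>k)\<close> is represented by the list
  \<open>zip m (zip u x)\<close>; \<open>list_type\<close> is the type of a list, its empirical distribution.\<close>

definition list_type :: "'b list \<Rightarrow> 'b \<Rightarrow> real" where
  "list_type ws w = count_list ws w / length ws"

lemma sum_list_map_eq_sum_count_list: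
  fixes f :: "'b \<Rightarrow> 'a :: semiring_1"
  assumes "set ws \<subseteq> A" and "finite A"
  shows "(\<Sum>w\<leftarrow>ws. f w) = (\<Sum>w\<in>A. of_nat (count_list ws w) * f w)"
  using assms(1)
proof (induction ws)
  case (Cons v ws)
  have "(\<Sum>w\<in>A. of_nat (count_list (v # ws) w) * f w)
      = (\<Sum>w\<in>A. of_nat (count_list ws w) * f w) + (\<Sum>w\<in>A. if v = w then f w else 0)"
    by (subst sum.distrib[symmetric]) (rule sum.cong, auto simp: algebra_simps)
  then show ?case
    using Cons assms(2) by (simp add: sum.delta add.commute)
qed simp

lemma sum_list_type:
  assumes "set ws \<subseteq> A" and "finite A"
  shows "(\<Sum>w\<in>A. list_type ws w * f w) = (\<Sum>w\<leftarrow>ws. f w) / length ws"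
  by (simp add: sum_list_map_eq_sum_count_list[OF assms] list_type_def sum_divide_distrib)

lemma list_type_pmf:
  assumes "ws \<noteq> []" and "set ws \<subseteq> A" and "finite A"
  shows "is_pmf_on A (list_type ws)"
  using assms sum_count_set[OF assms(2,3)]
  by (auto simp: is_pmf_on_def list_type_def count_list_0_iff
           simp flip: sum_divide_distrib of_nat_sum)

lemma list_type_in_Pset1_iff:
  assumes "ws \<noteq> []" and "set ws \<subseteq> W_set L"
  shows "list_type ws \<in> Pset1 L Nem psrc N nu \<delta>1 \<longleftrightarrow>
    (\<Sum>w\<leftarrow>ws. nu (fst w)) / length ws
      \<le> real Nem / real N * ((\<Sum>M\<in>{0..L}. binom_pmf L psrc M * nu M) + \<delta>1)"
  using list_type_pmf[OF assms finite_W_set]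
  by (simp add: Pset1_def sum_marg_M sum_list_type[OF assms(2) finite_W_set])

lemma Pset2_iff:
  "Q \<in> Pset2 L xi \<delta> \<longleftrightarrow> is_pmf_on (W_set L) Q \<and>
     (\<Sum>w\<in>W_set L. Q w * (case w of (M, U, X) \<Rightarrow> (real X - cMU L M U) * xi M U))
       \<le> \<delta> / 3 + sqrt ((\<delta> / 3)\<^sup>2 + 2 * \<delta> *
            (\<Sum>w\<in>W_set L. Q w * (case w of (M, U, X) \<Rightarrow> cMU L M U * (1 - cMU L M U) * (xi M U)\<^sup>2)))"
proof -
  have "(\<Sum>w\<in>W_set L. case w of (M, U, X) \<Rightarrow> Q w * ((real X - cMU L M U) * xi M U))
      = (\<Sum>w\<in>W_set L. Q w * (case w of (M, U, X) \<Rightarrow> (real X - cMU L M U) * xi M U))"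
    by (intro sum.cong refl) (simp split: prod.splits)
  moreover have "(\<Sum>(M, U)\<in>{0..L} \<times> {0..1}. marg_MU L Q M U * (cMU L M U * (1 - cMU L M U) * (xi M U)\<^sup>2))
      = (\<Sum>w\<in>W_set L. Q w * (case w of (M, U, X) \<Rightarrow> cMU L M U * (1 - cMU L M U) * (xi M U)\<^sup>2))"
    unfolding sum_marg_MU[of L _ "\<lambda>M U. cMU L M U * (1 - cMU L M U) * (xi M U)\<^sup>2"]
    by (intro sum.cong refl) (simp split: prod.splits)
  ultimately show ?thesis
    by (simp add: Pset2_def)
qed

lemma list_type_in_Pset2_iff:
  assumes "ws \<noteq> []" and "set ws \<subseteq> W_set L"
  shows "list_type ws \<in> Pset2 L xi \<delta> \<longleftrightarrow>
    (\<Sum>(M, U, X)\<leftarrow>ws. (real X - cMU L M U) * xi M U) / length ws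
      \<le> \<delta> / 3 + sqrt ((\<delta> / 3)\<^sup>2 + 2 * \<delta> *
           ((\<Sum>(M, U, X)\<leftarrow>ws. cMU L M U * (1 - cMU L M U) * (xi M U)\<^sup>2) / length ws))"
  using list_type_pmf[OF assms finite_W_set]
  by (simp add: Pset2_iff sum_list_type[OF assms(2) finite_W_set])

lemma set_zip3_subset_iff:
  assumes "length ms = n" "length us = n" "length xs = n"
  shows "set (zip ms (zip us xs)) \<subseteq> S \<longleftrightarrow> (\<forall>k<n. (ms ! k, us ! k, xs ! k) \<in> S)"
  using assms by (auto simp: set_zip)

lemma sum_list_zip3:
  assumes "length ms = n" "length us = n" "length xs = n"
  shows "(\<Sum>w\<leftarrow>zip ms (zip us xs). f w) = (\<Sum>k<n. f (ms ! k, us ! k, xs ! k))"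
  using assms by (simp add: sum_list_sum_nth atLeast0LessThan)

lemma map_snd_snd_zip3:
  "length ms = length xs \<Longrightarrow> length us = length xs \<Longrightarrow> map (\<lambda>w. snd (snd w)) (zip ms (zip us xs)) = xs"
  by (induction xs arbitrary: ms us) (auto simp: length_Suc_conv)

lemma map_snd_snd_in_binary_words:
  "set ws \<subseteq> W_set L \<Longrightarrow> map (\<lambda>w. snd (snd w)) ws \<in> binary_words (length ws)"
  by (auto simp: binary_words_def W_set_def)

definition uniform_mixture :: "'i set \<Rightarrow> ('i \<Rightarrow> 'b \<Rightarrow> real) \<Rightarrow> 'b \<Rightarrow> real" where
  "uniform_mixture I P w = (\<Sum>i\<in>I. P i w) / card I"

lemma sum_uniform_mixture:
  "(\<Sum>w\<in>A. uniform_mixture I P w * f w) = (\<Sum>i\<in>I. \<Sum>w\<in>A. P i w * f w) / card I"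
proof -
  have "(\<Sum>w\<in>A. uniform_mixture I P w * f w) = (\<Sum>w\<in>A. \<Sum>i\<in>I. P i w * f w) / card I"
    unfolding uniform_mixture_def by (simp add: sum_divide_distrib sum_distrib_right)
  then show ?thesis
    by (subst (asm) sum.swap)
qed

lemma uniform_mixture_pmf:
  assumes "finite I" and "I \<noteq> {}" and "\<forall>i\<in>I. is_pmf_on A (P i)"
  shows "is_pmf_on A (uniform_mixture I P)"
proof -
  have "(\<Sum>w\<in>A. uniform_mixture I P w) = (\<Sum>i\<in>I. \<Sum>w\<in>A. P i w) / card I"
    using sum_uniform_mixture[where f = "\<lambda>_. 1"] by simp
  also have "\<dots> = 1"
    using assms by (simp add: is_pmf_on_def)
  finally show ?thesis
    using assms by (auto simp: is_pmf_on_def uniform_mixture_def intro!: sum_nonneg divide_nonneg_nonneg)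
qed

lemma uniform_mixture_in_Pset1:
  assumes "finite I" and "I \<noteq> {}" and "\<forall>i\<in>I. P i \<in> Pset1 L Nem psrc N nu \<delta>1"
  shows "uniform_mixture I P \<in> Pset1 L Nem psrc N nu \<delta>1"
proof -
  let ?B = "real Nem / real N * ((\<Sum>M\<in>{0..L}. binom_pmf L psrc M * nu M) + \<delta>1)"
  have "(\<Sum>w\<in>W_set L. uniform_mixture I P w * nu (fst w))
      = (\<Sum>i\<in>I. \<Sum>w\<in>W_set L. P i w * nu (fst w)) / card I"
    by (rule sum_uniform_mixture)
  also have "\<dots> \<le> (\<Sum>i\<in>I. ?B) / card I"
    using assms(3) by (intro divide_right_mono sum_mono) (auto simp: Pset1_def sum_marg_M)
  also have "\<dots> = ?B"
    using assms(1,2) by simp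
  finally show ?thesis
    using assms by (auto simp: Pset1_def sum_marg_M intro!: uniform_mixture_pmf)
qed

lemma mean_sqrt_le_sqrt_mean:
  fixes a :: "'i \<Rightarrow> real"
  assumes "finite I" and "I \<noteq> {}" and "\<forall>i\<in>I. 0 \<le> a i"
  shows "(\<Sum>i\<in>I. sqrt (a i)) / card I \<le> sqrt ((\<Sum>i\<in>I. a i) / card I)"
proof (rule real_le_rsqrt)
  have "(\<Sum>i\<in>I. sqrt (a i) * 1)\<^sup>2 \<le> (\<Sum>i\<in>I. (sqrt (a i))\<^sup>2) * (\<Sum>i\<in>I. 1\<^sup>2)"
    by (rule Cauchy_Schwarz_ineq_sum)
  then have "(\<Sum>i\<in>I. sqrt (a i))\<^sup>2 \<le> (\<Sum>i\<in>I. a i) * card I"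
    using assms(3) by simp
  moreover have "0 < real (card I)"
    using assms(1,2) by (simp add: card_gt_0_iff)
  ultimately show "((\<Sum>i\<in>I. sqrt (a i)) / card I)\<^sup>2 \<le> (\<Sum>i\<in>I. a i) / card I"
    by (simp add: power_divide field_simps power2_eq_square)
qed

text \<open>The threshold of \<^const>\<open>Pset2\<close> is concave in the variance term, so \<^const>\<open>Pset2\<close> is closed
  under mixtures.\<close>

lemma uniform_mixture_in_Pset2:
  assumes "L \<ge> 2" and I: "finite I" "I \<noteq> {}" and P: "\<forall>i\<in>I. P i \<in> Pset2 L xi \<delta>" and "0 \<le> \<delta>"
  shows "uniform_mixture I P \<in> Pset2 L xi \<delta>"
proof -
  define F where "F w = (case w of (M, U, X) \<Rightarrow> (real X - cMU L M U) * xi M U)" for w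
  define G where "G w = (case w of (M, U, X) \<Rightarrow> cMU L M U * (1 - cMU L M U) * (xi M U)\<^sup>2)"
    for w :: "nat \<times> nat \<times> nat"
  define S where "S Q = (\<Sum>w\<in>W_set L. Q w * G w)" for Q :: "nat \<times> nat \<times> nat \<Rightarrow> real"
  have in_Pset2: "Q \<in> Pset2 L xi \<delta> \<longleftrightarrow> is_pmf_on (W_set L) Q \<and>
      (\<Sum>w\<in>W_set L. Q w * F w) \<le> \<delta> / 3 + sqrt ((\<delta> / 3)\<^sup>2 + 2 * \<delta> * S Q)" for Q
    unfolding Pset2_iff F_def G_def S_def ..
  have S_nonneg: "0 \<le> S (P i)" if "i \<in> I" for i
    unfolding S_def G_def using P that cMU_bounds[OF assms(1)]
    by (intro sum_nonneg) (auto simp: in_Pset2 is_pmf_on_def split: prod.splits)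
  have "(\<Sum>w\<in>W_set L. uniform_mixture I P w * F w) = (\<Sum>i\<in>I. \<Sum>w\<in>W_set L. P i w * F w) / card I"
    by (rule sum_uniform_mixture)
  also have "\<dots> \<le> (\<Sum>i\<in>I. \<delta> / 3 + sqrt ((\<delta> / 3)\<^sup>2 + 2 * \<delta> * S (P i))) / card I"
    using P by (intro divide_right_mono sum_mono) (auto simp: in_Pset2)
  also have "\<dots> = \<delta> / 3 + (\<Sum>i\<in>I. sqrt ((\<delta> / 3)\<^sup>2 + 2 * \<delta> * S (P i))) / card I"
    using I by (simp add: sum.distrib add_divide_distrib)
  also have "\<dots> \<le> \<delta> / 3 + sqrt ((\<Sum>i\<in>I. (\<delta> / 3)\<^sup>2 + 2 * \<delta> * S (P i)) / card I)"
    using mean_sqrt_le_sqrt_mean[OF I] S_nonneg assms(5) by simp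
  also have "(\<Sum>i\<in>I. (\<delta> / 3)\<^sup>2 + 2 * \<delta> * S (P i)) / card I = (\<delta> / 3)\<^sup>2 + 2 * \<delta> * S (uniform_mixture I P)"
    using I by (simp add: S_def sum_uniform_mixture sum.distrib add_divide_distrib sum_distrib_left)
  finally show ?thesis
    using P I by (auto simp: in_Pset2 intro!: uniform_mixture_pmf)
qed

section \<open>Counting words by the conditional entropy of their average type\<close>

lemma sum_ln_le_neg_card_mult_ln_card:
  fixes R :: "'a \<Rightarrow> real"
  assumes T: "finite T" "T \<noteq> {}" and R: "\<forall>x\<in>T. 0 < R x" "(\<Sum>x\<in>T. R x) \<le> 1"
  shows "(\<Sum>x\<in>T. ln (R x)) \<le> - real (card T) * ln (card T)"
proof -
  define A where "A = (\<Sum>x\<in>T. R x) / card T"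
  have card: "0 < real (card T)"
    using T by (simp add: card_gt_0_iff)
  have A: "0 < A" "A \<le> 1 / card T"
    unfolding A_def using T R card by (auto intro!: divide_pos_pos sum_pos divide_right_mono)
  have "(\<Sum>x\<in>T. ln (R x)) \<le> (\<Sum>x\<in>T. ln A + (R x / A - 1))"
  proof (intro sum_mono)
    fix x assume "x \<in> T"
    then have "0 < R x"
      using R by blast
    have "ln (R x / A) \<le> R x / A - 1"
      using \<open>0 < R x\<close> A by (simp add: ln_le_minus_one)
    moreover have "ln (R x / A) = ln (R x) - ln A"
      using \<open>0 < R x\<close> A by (simp add: ln_div)
    ultimately show "ln (R x) \<le> ln A + (R x / A - 1)"
      by linarith
  qed
  also have "\<dots> = card T * ln A + ((\<Sum>x\<in>T. R x) / A - card T)"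
    by (simp add: sum.distrib sum_subtractf sum_divide_distrib[symmetric])
  also have "\<dots> = card T * ln A"
    using A card by (simp add: A_def zero_less_divide_iff)
  also have "\<dots> \<le> card T * ln (1 / card T)"
    using A card by (intro mult_left_mono ln_mono) auto
  finally show ?thesis
    using card by (simp add: ln_div)
qed

lemma list_type_zip_pos:
  assumes "length xs = length ys" and "k < length xs"
  shows "0 < list_type (zip xs ys) (xs ! k, ys ! k)"
proof -
  have "(xs ! k, ys ! k) \<in> set (zip xs ys)"
    using assms by (metis in_set_zip fst_conv snd_conv)
  then have "count_list (zip xs ys) (xs ! k, ys ! k) \<noteq> 0"
    by (simp add: count_list_0_iff)
  then show ?thesis
    using assms by (auto simp: list_type_def intro!: divide_pos_pos)
qed

lemma uniform_mixture_list_type_zip_pos: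
  assumes "finite T" "x \<in> T" "length x = length ys" "k < length x"
  shows "0 < uniform_mixture T (\<lambda>x. list_type (zip x ys)) (x ! k, ys ! k)"
  unfolding uniform_mixture_def using assms list_type_zip_pos[of x ys k]
  by (intro divide_pos_pos sum_pos2[of T x]) (auto simp: list_type_def card_gt_0_iff)

lemma sum_prod_conditional_binary_words:
  fixes q :: "nat \<times> 'y \<Rightarrow> real"
  assumes "\<And>k. k < N \<Longrightarrow> q (0, ys ! k) + q (1, ys ! k) \<noteq> 0"
  shows "(\<Sum>x\<in>binary_words N. \<Prod>k<N. q (x ! k, ys ! k) / (q (0, ys ! k) + q (1, ys ! k))) = 1"
proof -
  have "(\<Sum>x\<in>binary_words N. \<Prod>k<N. q (x ! k, ys ! k) / (q (0, ys ! k) + q (1, ys ! k)))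
      = (\<Prod>k<N. q (0, ys ! k) / (q (0, ys ! k) + q (1, ys ! k)) + q (1, ys ! k) / (q (0, ys ! k) + q (1, ys ! k)))"
    by (rule sum_prod_binary_words[where f = "\<lambda>k a. q (a, ys ! k) / (q (0, ys ! k) + q (1, ys ! k))"])
  also have "\<dots> = 1"
    using assms by (intro prod.neutral ballI) (simp add: add_divide_distrib[symmetric])
  finally show ?thesis .
qed

lemma sum_nth_zip_eq_list_type:
  assumes "length xs = N" "length ys = N" "set (zip xs ys) \<subseteq> A" "finite A"
  shows "(\<Sum>k<N. g (xs ! k, ys ! k)) = N * (\<Sum>z\<in>A. list_type (zip xs ys) z * g z)"
  using assms sum_list_type[OF assms(3,4), of g] by (simp add: sum_list_sum_nth atLeast0LessThan)

text \<open>The conditional probabilities of the average joint type define a sub-probability on \<open>T\<close>.\<close>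

lemma sum_log_likelihood_le:
  fixes T :: "nat list set" and ys :: "'y list"
  assumes T: "T \<subseteq> binary_words N" "T \<noteq> {}" and ys: "length ys = N"
  defines "q \<equiv> uniform_mixture T (\<lambda>x. list_type (zip x ys))"
  shows "(\<Sum>x\<in>T. \<Sum>k<N. ln (q (x ! k, ys ! k) / (q (0, ys ! k) + q (1, ys ! k))))
           \<le> - real (card T) * ln (card T)"
proof -
  define R where "R x = (\<Prod>k<N. q (x ! k, ys ! k) / (q (0, ys ! k) + q (1, ys ! k)))" for x
  have finT: "finite T"
    using T(1) finite_binary_words by (rule finite_subset)
  have q_nonneg: "0 \<le> q z" for z
    by (simp add: q_def uniform_mixture_def list_type_def sum_nonneg)
  have q_pos: "0 < q (x ! k, ys ! k)" if "x \<in> T" "k < N" for x k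
    unfolding q_def using T that ys
    by (intro uniform_mixture_list_type_zip_pos[OF finT that(1)]) (auto simp: binary_words_def)
  have qY_pos: "0 < q (0, ys ! k) + q (1, ys ! k)" if "k < N" for k
  proof -
    obtain x where "x \<in> T"
      using T(2) by blast
    moreover have "x ! k \<in> {0, 1}"
      using T \<open>x \<in> T\<close> that binary_words_nth by blast
    ultimately show ?thesis
      using q_pos[OF \<open>x \<in> T\<close> that] q_nonneg[of "(0, ys ! k)"] q_nonneg[of "(1, ys ! k)"] by auto
  qed
  have ratio_pos: "0 < q (x ! k, ys ! k) / (q (0, ys ! k) + q (1, ys ! k))" if "x \<in> T" "k < N" for x k
    using q_pos[OF that] qY_pos[OF that(2)] by simp
  have "(\<Sum>x\<in>binary_words N. R x) = 1"
    unfolding R_def using qY_pos by (intro sum_prod_conditional_binary_words) force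
  moreover have "0 \<le> R x" for x
    unfolding R_def using q_nonneg by (intro prod_nonneg divide_nonneg_nonneg add_nonneg_nonneg) auto
  moreover have "0 < R x" if "x \<in> T" for x
    unfolding R_def using ratio_pos[OF that] by (intro prod_pos) auto
  ultimately have "(\<Sum>x\<in>T. ln (R x)) \<le> - real (card T) * ln (card T)"
    using sum_mono2[OF finite_binary_words T(1), of R] sum_ln_le_neg_card_mult_ln_card[OF finT T(2)]
    by force
  moreover have "ln (R x) = (\<Sum>k<N. ln (q (x ! k, ys ! k) / (q (0, ys ! k) + q (1, ys ! k))))"
    if "x \<in> T" for x
    unfolding R_def using ratio_pos[OF that] by (intro ln_prod) (auto simp: less_le)
  ultimately show ?thesis
    by simp
qed

lemma log_card_le_cond_entropy:
  fixes T :: "nat list set" and ys :: "'y list"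
  assumes T: "T \<subseteq> binary_words N" "T \<noteq> {}"
    and ys: "length ys = N" "set ys \<subseteq> Ys" "finite Ys"
  defines "q \<equiv> uniform_mixture T (\<lambda>x. list_type (zip x ys))"
  shows "log 2 (card T) \<le> N * (\<Sum>X\<in>{0, 1}. \<Sum>y\<in>Ys.
           if q (X, y) = 0 then 0 else - q (X, y) * log 2 (q (X, y) / (q (0, y) + q (1, y))))"
proof -
  define r where "r z = q z / (q (0, snd z) + q (1, snd z))" for z
  define E where "E = (\<Sum>z\<in>{0, 1} \<times> Ys. q z * ln (r z))"
  have card: "0 < real (card T)"
    using T finite_subset[OF T(1) finite_binary_words] by (simp add: card_gt_0_iff)
  \<comment> \<open>the log-likelihood of each word is a sum over its joint type with \<open>ys\<close>\<close>
  have "(\<Sum>k<N. ln (r (x ! k, ys ! k))) = N * (\<Sum>z\<in>{0, 1} \<times> Ys. list_type (zip x ys) z * ln (r z))"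
    if "x \<in> T" for x
  proof -
    have "x \<in> binary_words N"
      using T that by blast
    then have "length x = N" "set (zip x ys) \<subseteq> {0, 1} \<times> Ys"
      using binary_words_nth ys by (force simp: binary_words_def set_zip)+
    then show ?thesis
      using ys by (intro sum_nth_zip_eq_list_type) auto
  qed
  then have "(\<Sum>x\<in>T. \<Sum>k<N. ln (r (x ! k, ys ! k))) = card T * (N * E)"
    using card by (simp add: E_def q_def sum_uniform_mixture sum_distrib_left[symmetric])
  with sum_log_likelihood_le[OF T ys(1)] have "card T * (N * E) \<le> card T * (- ln (card T))"
    by (simp add: r_def q_def)
  then have "ln (card T) \<le> N * (- E)"
    using card by (simp only: mult_le_cancel_left_pos)
  then have "ln (card T) / ln 2 \<le> N * (- E) / ln 2"
    by (rule divide_right_mono) simp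
  moreover have "(\<Sum>X\<in>{0, 1}. \<Sum>y\<in>Ys.
           if q (X, y) = 0 then 0 else - q (X, y) * log 2 (q (X, y) / (q (0, y) + q (1, y)))) = - E / ln 2"
    unfolding sum.cartesian_product E_def sum_divide_distrib sum_negf[symmetric]
    by (intro sum.cong refl) (auto simp: r_def log_def)
  ultimately show ?thesis
    by (simp add: log_def)
qed

lemma sum_list_indicator_eq_count_list:
  "(\<Sum>w\<leftarrow>ws. if g w = a then 1 else 0) = (of_nat (count_list (map g ws) a) :: 'a :: semiring_1)"
  by (induction ws) auto

lemma marg_XY_list_type:
  assumes "set ws \<subseteq> W_set L"
  shows "marg_XY L (list_type ws) X y
           = list_type (zip (map (\<lambda>w. snd (snd w)) ws) (map fY ws)) (X, y)"
proof -
  have "zip (map (\<lambda>w. snd (snd w)) ws) (map fY ws) = map (\<lambda>w. (snd (snd w), fY w)) ws"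
    by (induction ws) auto
  then show ?thesis
    using sum_list_indicator_eq_count_list[where 'a = real, of "\<lambda>w. (snd (snd w), fY w)" "(X, y)" ws]
    unfolding marg_XY_eq_sum sum_list_type[OF assms finite_W_set] by (simp add: list_type_def)
qed

lemma marg_XY_uniform_mixture:
  "marg_XY L (uniform_mixture I P) X y = (\<Sum>i\<in>I. marg_XY L (P i) X y) / card I"
  by (simp add: marg_XY_eq_sum sum_uniform_mixture)

text \<open>\<open>typical_set L E N ys\<close> is the set \<open>T(N, y\<^sup>N)\<close> of the theorem, taken with
  \<open>E = Pset1 L Nem psrc N nu \<delta>1 \<inter> Pset2 L xi (\<delta>2 N)\<close>.\<close>

definition typical_set ::
    "nat \<Rightarrow> (nat \<times> nat \<times> nat \<Rightarrow> real) set \<Rightarrow> nat \<Rightarrow> (nat \<times> nat) list \<Rightarrow> nat list set" where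
  "typical_set L E N ys = {xs. \<exists>ws. length ws = N \<and> set ws \<subseteq> W_set L \<and>
      map (\<lambda>w. snd (snd w)) ws = xs \<and> map fY ws = ys \<and> list_type ws \<in> E}"

lemma typical_set_subset_binary_words: "typical_set L E N ys \<subseteq> binary_words N"
  using map_snd_snd_in_binary_words by (auto simp: typical_set_def)

lemma log_card_typical_set_le:
  assumes nonempty: "typical_set L E N ys \<noteq> {}"
    and mixture_closed: "\<And>I P. finite I \<Longrightarrow> I \<noteq> {} \<Longrightarrow> \<forall>i\<in>I. P i \<in> E \<Longrightarrow>
                            uniform_mixture (I :: nat list set) P \<in> E"
    and entropy_bound: "\<forall>P\<in>E. cond_entropy_XY L P \<le> h"
  shows "log 2 (card (typical_set L E N ys)) \<le> N * h"
proof -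
  define T where "T = typical_set L E N ys"
  define ws where "ws x = (SOME ws. length ws = N \<and> set ws \<subseteq> W_set L \<and>
      map (\<lambda>w. snd (snd w)) ws = x \<and> map fY ws = ys \<and> list_type ws \<in> E)" for x
  have ws: "length (ws x) = N \<and> set (ws x) \<subseteq> W_set L \<and> map (\<lambda>w. snd (snd w)) (ws x) = x \<and>
      map fY (ws x) = ys \<and> list_type (ws x) \<in> E" if "x \<in> T" for x
    using that unfolding T_def typical_set_def ws_def by (rule CollectE) (rule someI_ex)
  define P where "P = uniform_mixture T (\<lambda>x. list_type (ws x))"
  have T: "T \<subseteq> binary_words N" "finite T" "T \<noteq> {}"
    using typical_set_subset_binary_words finite_subset[OF _ finite_binary_words] nonempty
    unfolding T_def by blast+
  then obtain x0 where "x0 \<in> T" by blast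
  then have "fY w \<in> Y_set L" if "w \<in> set (ws x0)" for w
    using ws[of x0] fY_in_Y_set subsetD that by metis
  then have ys: "length ys = N" "set ys \<subseteq> Y_set L"
    using ws[OF \<open>x0 \<in> T\<close>] by auto
  have "P \<in> E"
    unfolding P_def using T ws by (intro mixture_closed) auto
  define q where "q = uniform_mixture T (\<lambda>x. list_type (zip x ys))"
  have marg: "marg_XY L P X y = q (X, y)" for X y
    using ws by (simp add: P_def q_def marg_XY_uniform_mixture marg_XY_list_type uniform_mixture_def
                  cong: sum.cong)
  have entropy: "cond_entropy_XY L P = (\<Sum>X\<in>{0, 1}. \<Sum>y\<in>Y_set L.
      if q (X, y) = 0 then 0 else - q (X, y) * log 2 (q (X, y) / (q (0, y) + q (1, y))))"
  proof -
    have marg_Y: "marg_Y L P y = q (0, y) + q (1, y)" for y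
      by (simp add: marg_Y_def marg)
    show ?thesis
      unfolding cond_entropy_XY_def marg marg_Y ..
  qed
  have "log 2 (card T) \<le> N * cond_entropy_XY L P"
    unfolding entropy using log_card_le_cond_entropy[OF T(1,3) ys finite_Y_set, folded q_def] .
  also have "\<dots> \<le> N * h"
    using \<open>P \<in> E\<close> entropy_bound by (intro mult_left_mono) auto
  finally show ?thesis
    unfolding T_def .
qed

section \<open>A Chernoff bound for the multinomial histogram\<close>

definition compositions :: "nat \<Rightarrow> nat \<Rightarrow> (nat \<Rightarrow> nat) set" where
  "compositions L n = {w. (\<forall>M>L. w M = 0) \<and> (\<Sum>M\<in>{0..L}. w M) = n}"

lemma compositions_0: "compositions 0 n = {(\<lambda>_. 0)(0 := n)}"
  by (auto simp: compositions_def fun_eq_iff)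

lemma compositions_Suc:
  "bij_betw (\<lambda>(k, w). w(Suc L := k)) (SIGMA k:{..n}. compositions L (n - k)) (compositions (Suc L) n)"
proof (rule bij_betw_byWitness[where f' = "\<lambda>w. (w (Suc L), w(Suc L := 0))"])
  show "(\<lambda>(k, w). w(Suc L := k)) ` (SIGMA k:{..n}. compositions L (n - k)) \<subseteq> compositions (Suc L) n"
    by (auto simp: compositions_def sum.atLeast0_atMost_Suc)
  have "(\<Sum>M\<in>{0..L}. (w(Suc L := 0)) M) = (\<Sum>M\<in>{0..L}. w M)" for w :: "nat \<Rightarrow> nat"
    by (intro sum.cong) auto
  then show "(\<lambda>w. (w (Suc L), w(Suc L := 0))) ` compositions (Suc L) n \<subseteq> (SIGMA k:{..n}. compositions L (n - k))"
    by (auto simp: compositions_def sum.atLeast0_atMost_Suc)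
qed (auto simp: compositions_def fun_eq_iff)

lemma finite_compositions: "finite (compositions L n)"
proof (induction L arbitrary: n)
  case (Suc L)
  then show ?case
    using bij_betw_finite[OF compositions_Suc] by blast
qed (simp add: compositions_0)

lemma multinomial_expansion:
  fixes a :: "nat \<Rightarrow> 'a :: field_char_0"
  shows "(\<Sum>w\<in>compositions L n. fact n / (\<Prod>M\<in>{0..L}. fact (w M)) * (\<Prod>M\<in>{0..L}. a M ^ w M))
         = (\<Sum>M\<in>{0..L}. a M) ^ n"
proof (induction L arbitrary: n)
  case 0
  then show ?case by (simp add: compositions_0)
next
  case (Suc L)
  let ?t = "\<lambda>L n w. fact n / (\<Prod>M\<in>{0..L}. fact (w M)) * (\<Prod>M\<in>{0..L}. a M ^ w M) :: 'a"
  have summand: "?t (Suc L) n (w(Suc L := k)) = of_nat (n choose k) * a (Suc L) ^ k * ?t L (n - k) w"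
    if "k \<le> n" for k w
  proof -
    have "(\<Prod>M\<in>{0..L}. fact ((w(Suc L := k)) M)) = (\<Prod>M\<in>{0..L}. fact (w M) :: 'a)"
      "(\<Prod>M\<in>{0..L}. a M ^ (w(Suc L := k)) M) = (\<Prod>M\<in>{0..L}. a M ^ w M)"
      by (auto intro!: prod.cong)
    moreover have "(\<Prod>M\<in>{0..L}. fact (w M)) \<noteq> (0 :: 'a)"
      by (simp add: prod_zero_iff)
    ultimately show ?thesis
      using that by (simp add: prod.atLeast0_atMost_Suc binomial_fact field_simps)
  qed
  have "(\<Sum>w\<in>compositions (Suc L) n. ?t (Suc L) n w)
      = (\<Sum>k\<le>n. \<Sum>w\<in>compositions L (n - k). ?t (Suc L) n (w(Suc L := k)))"
    by (simp add: sum.reindex_bij_betw[OF compositions_Suc, symmetric] sum.Sigma finite_compositions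
                  split_def)
  also have "\<dots> = (\<Sum>k\<le>n. of_nat (n choose k) * a (Suc L) ^ k *
                       (\<Sum>w\<in>compositions L (n - k). ?t L (n - k) w))"
  proof (intro sum.cong refl)
    fix k assume "k \<in> {..n}"
    then show "(\<Sum>w\<in>compositions L (n - k). ?t (Suc L) n (w(Suc L := k)))
        = of_nat (n choose k) * a (Suc L) ^ k * (\<Sum>w\<in>compositions L (n - k). ?t L (n - k) w)"
      by (simp only: summand atMost_iff sum_distrib_left)
  qed
  also have "\<dots> = (\<Sum>k\<le>n. of_nat (n choose k) * a (Suc L) ^ k * (\<Sum>M\<in>{0..L}. a M) ^ (n - k))"
    by (simp only: Suc.IH)
  also have "\<dots> = (\<Sum>M\<in>{0..Suc L}. a M) ^ n"
    by (simp add: binomial_ring sum.atLeast0_atMost_Suc add.commute)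
  finally show ?case .
qed

lemma sum_binom_pmf: "(\<Sum>M\<in>{0..L}. binom_pmf L p M) = 1"
  using binomial_ring[of p "1 - p" L] by (simp add: binom_pmf_def atLeast0AtMost)

lemma binom_pmf_nonneg: "0 \<le> p \<Longrightarrow> p \<le> 1 \<Longrightarrow> 0 \<le> binom_pmf L p M"
  by (simp add: binom_pmf_def)

text \<open>The likelihood ratio \<open>(a/b)\<^sup>M ((1-a)/(1-b))\<^sup>L\<^sup>-\<^sup>M\<close> is at most \<open>1\<close>: bound its logarithm
  with \<open>ln x \<le> x - 1\<close>.\<close>

lemma power_mult_one_minus_power_mono:
  fixes a b :: real
  assumes a: "0 < a" "a \<le> b" and b: "b < 1" and M: "real L * b \<le> real M" "M \<le> L"
  shows "a ^ M * (1 - a) ^ (L - M) \<le> b ^ M * (1 - b) ^ (L - M)"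
proof -
  define u where "u = a / b"
  define v where "v = (1 - a) / (1 - b)"
  have uv: "0 < u" "0 < v"
    using a b by (simp_all add: u_def v_def)
  have "ln (u ^ M * v ^ (L - M)) = real M * ln u + real (L - M) * ln v"
    using uv by (simp add: ln_mult ln_realpow)
  also have "\<dots> \<le> real M * (u - 1) + real (L - M) * (v - 1)"
    using uv by (intro add_mono mult_left_mono ln_le_minus_one) auto
  also have "\<dots> = (b - a) * (real L * b - real M) / (b * (1 - b))"
    using a b M by (simp add: u_def v_def of_nat_diff field_simps)
  also have "\<dots> \<le> 0"
    using a b M by (intro divide_nonpos_nonneg mult_nonneg_nonpos) auto
  finally have "ln (u ^ M * v ^ (L - M)) \<le> 0" .
  then have "u ^ M * v ^ (L - M) \<le> 1"
    using uv by simp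
  moreover have "a ^ M * (1 - a) ^ (L - M) = u ^ M * v ^ (L - M) * (b ^ M * (1 - b) ^ (L - M))"
    using a b by (simp add: u_def v_def power_divide field_simps)
  ultimately show ?thesis
    using a b by (simp add: mult_left_le_one_le)
qed

lemma binom_pmf_mono:
  fixes a b :: real
  assumes a: "0 \<le> a" "a \<le> b" and b: "b \<le> 1" and M: "real L * b \<le> real M" "M \<le> L"
  shows "binom_pmf L a M \<le> binom_pmf L b M"
proof -
  have "a ^ M * (1 - a) ^ (L - M) \<le> b ^ M * (1 - b) ^ (L - M)"
  proof (cases "M = L")
    case True
    then show ?thesis using a by (simp add: power_mono)
  next
    case False
    then have "b < 1"
      using b M by (cases "b = 1") auto
    have "a = b" if "a = 0" "M = 0"
    proof -
      have "0 < L"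
        using M \<open>M \<noteq> L\<close> that by simp
      then have "b \<le> 0"
        using M that by (simp add: mult_le_0_iff)
      then show ?thesis
        using a that by simp
    qed
    then consider "a = b" | "a = 0" "0 < M" | "0 < a" "a \<le> b"
      using a by fastforce
    then show ?thesis
    proof cases
      case 2
      then show ?thesis using \<open>b < 1\<close> a by (simp add: zero_power)
    next
      case 3
      then show ?thesis using power_mult_one_minus_power_mono \<open>b < 1\<close> M by blast
    qed simp
  qed
  then show ?thesis
    unfolding binom_pmf_def by (simp add: mult.assoc mult_left_mono)
qed

lemma sum_binom_pmf_mult_mono:
  fixes a b :: real and g :: "nat \<Rightarrow> real"
  assumes "0 \<le> a" "a \<le> b" "b \<le> 1"
    and g: "\<forall>M\<in>{0..L}. 0 \<le> g M \<and> (g M \<noteq> 0 \<longrightarrow> real L * b \<le> real M)"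
  shows "(\<Sum>M\<in>{0..L}. binom_pmf L a M * g M) \<le> (\<Sum>M\<in>{0..L}. binom_pmf L b M * g M)"
proof (intro sum_mono)
  fix M assume "M \<in> {0..L}"
  then show "binom_pmf L a M * g M \<le> binom_pmf L b M * g M"
    using g assms(1-3) binom_pmf_mono[of a b L M] by (cases "g M = 0") (auto intro: mult_right_mono)
qed

lemma sum_binom_pmf_exp_mono:
  fixes a b s :: real and nu :: "nat \<Rightarrow> real"
  assumes ab: "0 \<le> a" "a \<le> b" "b \<le> 1" and s: "0 \<le> s"
    and nu: "\<forall>M\<in>{0..L}. 0 \<le> nu M \<and> (real M < real L * b \<longrightarrow> nu M = 0)"
  shows "(\<Sum>M\<in>{0..L}. binom_pmf L a M * exp (s * nu M)) \<le> (\<Sum>M\<in>{0..L}. binom_pmf L b M * exp (s * nu M))"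
proof -
  have split: "(\<Sum>M\<in>{0..L}. binom_pmf L p M * exp (s * nu M))
      = (\<Sum>M\<in>{0..L}. binom_pmf L p M * (exp (s * nu M) - 1)) + 1" for p
    using sum_binom_pmf[of L p] by (simp add: right_diff_distrib sum_subtractf)
  have "(\<Sum>M\<in>{0..L}. binom_pmf L a M * (exp (s * nu M) - 1))
      \<le> (\<Sum>M\<in>{0..L}. binom_pmf L b M * (exp (s * nu M) - 1))"
    using nu s by (intro sum_binom_pmf_mult_mono[OF ab]) (auto simp: not_less)
  then show ?thesis
    unfolding split by simp
qed

lemma multinomial_tail_le:
  fixes p nu :: "nat \<Rightarrow> real" and s t :: real
  assumes p: "\<forall>M\<in>{0..L}. 0 \<le> p M" and s: "0 \<le> s"
  shows "(\<Sum>w\<in>{w\<in>compositions L n. n * t < (\<Sum>M\<in>{0..L}. w M * nu M)}.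
            fact n / (\<Prod>M\<in>{0..L}. fact (w M)) * (\<Prod>M\<in>{0..L}. p M ^ w M))
         \<le> exp (- s * n * t) * (\<Sum>M\<in>{0..L}. p M * exp (s * nu M)) ^ n"
proof -
  define \<mu> where "\<mu> w = fact n / (\<Prod>M\<in>{0..L}. fact (w M)) * (\<Prod>M\<in>{0..L}. p M ^ w M)" for w
  define S where "S w = (\<Sum>M\<in>{0..L}. real (w M) * nu M)" for w
  have \<mu>_nonneg: "0 \<le> \<mu> w" for w
    using p by (auto simp: \<mu>_def intro!: mult_nonneg_nonneg divide_nonneg_nonneg prod_nonneg)
  have \<mu>_exp: "\<mu> w * exp (s * (S w - n * t))
      = exp (- s * n * t) * (fact n / (\<Prod>M\<in>{0..L}. fact (w M)) * (\<Prod>M\<in>{0..L}. (p M * exp (s * nu M)) ^ w M))"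
    for w
  proof -
    have "exp (s * S w) = (\<Prod>M\<in>{0..L}. exp (s * nu M) ^ w M)"
      by (simp add: S_def sum_distrib_left exp_sum exp_of_nat_mult[symmetric] mult_ac)
    then show ?thesis
      by (simp add: \<mu>_def right_diff_distrib exp_diff exp_minus power_mult_distrib prod.distrib
                    field_simps)
  qed
  \<comment> \<open>Markov's inequality for the exponential moment\<close>
  have "(\<Sum>w\<in>{w\<in>compositions L n. n * t < S w}. \<mu> w)
      \<le> (\<Sum>w\<in>{w\<in>compositions L n. n * t < S w}. \<mu> w * exp (s * (S w - n * t)))"
  proof (intro sum_mono)
    fix w assume "w \<in> {w\<in>compositions L n. n * t < S w}"
    then have "1 \<le> exp (s * (S w - n * t))"
      using s by simp
    then show "\<mu> w \<le> \<mu> w * exp (s * (S w - n * t))"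
      using \<mu>_nonneg[of w] by (simp add: mult_le_cancel_left1)
  qed
  also have "\<dots> \<le> (\<Sum>w\<in>compositions L n. \<mu> w * exp (s * (S w - n * t)))"
    using \<mu>_nonneg by (intro sum_mono2 finite_compositions) auto
  also have "\<dots> = exp (- s * n * t) * (\<Sum>w\<in>compositions L n.
      fact n / (\<Prod>M\<in>{0..L}. fact (w M)) * (\<Prod>M\<in>{0..L}. (p M * exp (s * nu M)) ^ w M))"
    by (simp only: \<mu>_exp sum_distrib_left)
  also have "\<dots> = exp (- s * n * t) * (\<Sum>M\<in>{0..L}. p M * exp (s * nu M)) ^ n"
    by (simp only: multinomial_expansion)
  finally show ?thesis
    unfolding \<mu>_def S_def .
qed

lemma multinomial_tail_eq_0:
  fixes p nu :: "nat \<Rightarrow> real" and t :: real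
  assumes "\<forall>M\<in>{0..L}. p M \<noteq> 0 \<longrightarrow> nu M \<le> t"
  shows "(\<Sum>w\<in>{w\<in>compositions L n. n * t < (\<Sum>M\<in>{0..L}. w M * nu M)}.
            fact n / (\<Prod>M\<in>{0..L}. fact (w M)) * (\<Prod>M\<in>{0..L}. p M ^ w M)) = 0"
proof (intro sum.neutral ballI)
  fix w assume w: "w \<in> {w\<in>compositions L n. n * t < (\<Sum>M\<in>{0..L}. w M * nu M)}"
  show "fact n / (\<Prod>M\<in>{0..L}. fact (w M)) * (\<Prod>M\<in>{0..L}. p M ^ w M) = 0"
  proof (rule ccontr)
    assume "fact n / (\<Prod>M\<in>{0..L}. fact (w M)) * (\<Prod>M\<in>{0..L}. p M ^ w M) \<noteq> 0"
    then have "w M \<noteq> 0 \<Longrightarrow> nu M \<le> t" if "M \<in> {0..L}" for M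
      using assms that by force
    then have "(\<Sum>M\<in>{0..L}. w M * nu M) \<le> (\<Sum>M\<in>{0..L}. w M * t)"
      by (intro sum_mono) (metis mult_eq_0_iff mult_left_mono of_nat_0 of_nat_0_le_iff order_refl)
    also have "\<dots> = n * t"
      using w by (simp add: compositions_def flip: sum_distrib_right of_nat_sum)
    finally show False
      using w by simp
  qed
qed

lemma tilted_mean_reaches:
  fixes b nu :: "nat \<Rightarrow> real" and t :: real
  assumes b: "\<forall>M\<in>{0..L}. 0 \<le> b M" "(\<Sum>M\<in>{0..L}. b M) \<le> 1" and nu: "\<forall>M\<in>{0..L}. 0 \<le> nu M"
    and t: "0 \<le> t" and Ms: "Ms \<in> {0..L}" "0 < b Ms" "t < nu Ms"
  obtains s where "0 \<le> s"
    "t * (\<Sum>M\<in>{0..L}. b M * exp (s * nu M)) \<le> (\<Sum>M\<in>{0..L}. b M * nu M * exp (s * nu M))"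
proof -
  define d where "d = nu Ms - t"
  \<comment> \<open>large enough for the mass \<open>b Ms\<close> above \<open>t\<close> to outweigh all the mass below \<open>t\<close>\<close>
  define s where "s = \<bar>ln (t / (b Ms * d))\<bar> / d"
  have d: "0 < d" and s: "0 \<le> s"
    using Ms by (simp_all add: d_def s_def)
  have "t \<le> b Ms * d * exp (s * d)"
  proof (cases "t = 0")
    case False
    then have "t / (b Ms * d) \<le> exp (s * d)"
      using t d Ms by (simp add: s_def) (metis abs_ge_self exp_le_cancel_iff exp_ln divide_pos_pos
                                              mult_pos_pos order_le_less)
    then show ?thesis
      using d Ms by (simp add: divide_le_eq mult_ac)
  qed (use d Ms in simp)
  then have "t * exp (s * t) \<le> b Ms * (nu Ms - t) * exp (s * nu Ms)"
    using mult_right_mono[of t "b Ms * d * exp (s * d)" "exp (s * t)"]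
    by (simp add: d_def mult_ac flip: exp_add) (simp add: algebra_simps)
  moreover have "- (b M * (t * exp (s * t))) \<le> b M * (nu M - t) * exp (s * nu M)" if "M \<in> {0..L}" for M
  proof (cases "t \<le> nu M")
    case False
    then have "b M * (t - nu M) * exp (s * nu M) \<le> b M * t * exp (s * t)"
      using b nu that t s by (intro mult_mono) (auto intro: mult_left_mono)
    then show ?thesis
      by (simp add: algebra_simps)
  next
    case True
    have "0 \<le> b M"
      using b that by simp
    then have "- (b M * (t * exp (s * t))) \<le> 0" "0 \<le> b M * (nu M - t) * exp (s * nu M)"
      using True t by simp_all
    then show ?thesis
      by linarith
  qed
  then have "- ((\<Sum>M\<in>{0..L} - {Ms}. b M) * (t * exp (s * t)))
      \<le> (\<Sum>M\<in>{0..L} - {Ms}. b M * (nu M - t) * exp (s * nu M))"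
    by (auto simp: sum_distrib_right simp flip: sum_negf intro!: sum_mono)
  moreover have "(\<Sum>M\<in>{0..L} - {Ms}. b M) * (t * exp (s * t)) \<le> t * exp (s * t)"
    using b t sum_mono2[of "{0..L}" "{0..L} - {Ms}" b]
    by (intro mult_left_le_one_le) (auto intro: sum_nonneg)
  ultimately have "0 \<le> (\<Sum>M\<in>{0..L}. b M * (nu M - t) * exp (s * nu M))"
    using Ms by (simp add: sum.remove)
  then show thesis
    using s by (intro that[of s]) (simp_all add: algebra_simps sum_subtractf sum_distrib_left)
qed

lemma KL2_tilted:
  fixes b nu :: "nat \<Rightarrow> real" and s :: real
  assumes b: "\<forall>M\<in>{0..L}. 0 \<le> b M" and Z: "0 < (\<Sum>M\<in>{0..L}. b M * exp (s * nu M))"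
    and Q: "\<And>M. Q M = (if M \<in> {0..L} then b M * exp (s * nu M) / (\<Sum>M\<in>{0..L}. b M * exp (s * nu M))
                       else 0)"
  shows "is_pmf_on {0..L} Q"
    and "KL2 L Q b = (s * (\<Sum>M\<in>{0..L}. Q M * nu M) - ln (\<Sum>M\<in>{0..L}. b M * exp (s * nu M))) / ln 2"
proof -
  let ?Z = "\<Sum>M\<in>{0..L}. b M * exp (s * nu M)"
  show pmf: "is_pmf_on {0..L} Q"
    using b Z by (auto simp: is_pmf_on_def Q simp flip: sum_divide_distrib)
  have "KL2 L Q b = (\<Sum>M\<in>{0..L}. Q M * (s * nu M - ln ?Z) / ln 2)"
    unfolding KL2_def
  proof (intro sum.cong refl)
    fix M assume "M \<in> {0..L}"
    then show "(if Q M = 0 then 0 else Q M * log 2 (Q M / b M)) = Q M * (s * nu M - ln ?Z) / ln 2"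
      using Z by (auto simp: Q log_def ln_div)
  qed
  also have "\<dots> = (\<Sum>M\<in>{0..L}. s * (Q M * nu M) - Q M * ln ?Z) / ln 2"
    by (simp add: sum_divide_distrib algebra_simps)
  also have "\<dots> = (s * (\<Sum>M\<in>{0..L}. Q M * nu M) - (\<Sum>M\<in>{0..L}. Q M) * ln ?Z) / ln 2"
    by (simp add: sum_subtractf sum_distrib_left sum_distrib_right)
  finally show "KL2 L Q b = (s * (\<Sum>M\<in>{0..L}. Q M * nu M) - ln ?Z) / ln 2"
    using pmf by (simp add: is_pmf_on_def)
qed

text \<open>The Chernoff exponent of the weighted sum is attained as a divergence: tilting \<open>b\<close> exponentially
  until its mean of \<open>nu\<close> is exactly \<open>t\<close>.\<close>

lemma exists_tilted_pmf:
  fixes b nu :: "nat \<Rightarrow> real" and t :: real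
  assumes b: "\<forall>M\<in>{0..L}. 0 \<le> b M" "(\<Sum>M\<in>{0..L}. b M) = 1" and nu: "\<forall>M\<in>{0..L}. 0 \<le> nu M"
    and mean: "(\<Sum>M\<in>{0..L}. b M * nu M) \<le> t" and Ms: "Ms \<in> {0..L}" "0 < b Ms" "t < nu Ms"
  obtains s Q where "0 \<le> s" "is_pmf_on {0..L} Q" "t \<le> (\<Sum>M\<in>{0..L}. Q M * nu M)"
    "\<forall>M\<in>{0..L}. b M = 0 \<longrightarrow> Q M = 0"
    "2 powr (- real n * KL2 L Q b) = (\<Sum>M\<in>{0..L}. b M * exp (s * nu M)) ^ n * exp (- s * n * t)"
proof -
  define Z where "Z x = (\<Sum>M\<in>{0..L}. b M * exp (x * nu M))" for x
  define f where "f x = (\<Sum>M\<in>{0..L}. b M * nu M * exp (x * nu M)) / Z x" for x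
  have Z: "0 < Z x" for x
  proof -
    have "b Ms * exp (x * nu Ms) \<le> Z x"
      unfolding Z_def using Ms b by (intro member_le_sum) auto
    moreover have "0 < b Ms * exp (x * nu Ms)"
      using Ms by simp
    ultimately show ?thesis
      by linarith
  qed
  have "0 \<le> (\<Sum>M\<in>{0..L}. b M * nu M)"
    using b nu by (intro sum_nonneg) auto
  then have t: "0 \<le> t"
    using mean by linarith
  obtain s1 where s1: "0 \<le> s1" "t \<le> f s1"
    using tilted_mean_reaches[OF b(1) _ nu t Ms] b(2) Z
    by (metis Z_def f_def order_refl pos_le_divide_eq mult.commute)
  have "continuous_on {0..s1} f"
    unfolding f_def Z_def using Z[unfolded Z_def]
    by (intro continuous_intros) (auto simp: less_imp_neq[symmetric])
  moreover have "f 0 \<le> t"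
    using mean b by (simp add: f_def Z_def)
  ultimately obtain s where s: "0 \<le> s" "f s = t"
    using IVT'[of f 0 t s1] s1 by auto
  define Q where "Q M = (if M \<in> {0..L} then b M * exp (s * nu M) / Z s else 0)" for M
  have Q_mean: "(\<Sum>M\<in>{0..L}. Q M * nu M) = t"
    using s by (simp add: Q_def f_def sum_divide_distrib mult_ac)
  have pmf: "is_pmf_on {0..L} Q" and KL: "KL2 L Q b = (s * t - ln (Z s)) / ln 2"
    using KL2_tilted[OF b(1) Z[of s, unfolded Z_def], of Q] Q_mean
    by (simp_all add: Q_def Z_def)
  have "2 powr (- real n * KL2 L Q b) = exp (n * ln (Z s)) * exp (- s * n * t)"
    by (simp add: KL powr_def exp_add[symmetric] field_simps)
  also have "exp (n * ln (Z s)) = Z s ^ n"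
    using Z[of s] by (simp add: exp_of_nat_mult)
  finally have "2 powr (- real n * KL2 L Q b) = (\<Sum>M\<in>{0..L}. b M * exp (s * nu M)) ^ n * exp (- s * n * t)"
    by (simp add: Z_def)
  moreover have "\<forall>M\<in>{0..L}. b M = 0 \<longrightarrow> Q M = 0"
    by (simp add: Q_def)
  ultimately show thesis
    using that s pmf Q_mean by simp
qed

lemma multinomial_tail_le_divergence:
  fixes podd psrc t :: real and nu :: "nat \<Rightarrow> real"
  assumes p: "0 \<le> podd" "podd \<le> psrc" "psrc \<le> 1"
    and nu: "\<forall>M\<in>{0..L}. 0 \<le> nu M" "\<forall>M\<in>{0..L}. real M < real L * psrc \<longrightarrow> nu M = 0"
    and mean: "(\<Sum>M\<in>{0..L}. binom_pmf L psrc M * nu M) \<le> t"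
    and Ms: "Ms \<in> {0..L}" "0 < binom_pmf L podd Ms" "t < nu Ms"
  obtains Q where "is_pmf_on {0..L} Q" "t \<le> (\<Sum>M\<in>{0..L}. Q M * nu M)"
    "\<forall>M\<in>{0..L}. binom_pmf L psrc M = 0 \<longrightarrow> Q M = 0"
    "(\<Sum>w\<in>{w\<in>compositions L n. n * t < (\<Sum>M\<in>{0..L}. w M * nu M)}.
        fact n / (\<Prod>M\<in>{0..L}. fact (w M)) * (\<Prod>M\<in>{0..L}. binom_pmf L podd M ^ w M))
       \<le> 2 powr (- real n * KL2 L Q (binom_pmf L psrc))"
proof -
  have "0 \<le> (\<Sum>M\<in>{0..L}. binom_pmf L psrc M * nu M)"
    using nu(1) binom_pmf_nonneg[of psrc L] p by (intro sum_nonneg mult_nonneg_nonneg) auto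
  then have "0 \<le> t"
    using mean by linarith
  then have "real L * psrc \<le> real Ms"
    using nu(2) Ms by force
  then have "0 < binom_pmf L psrc Ms"
    using binom_pmf_mono[OF p] Ms by fastforce
  moreover have "\<forall>M\<in>{0..L}. 0 \<le> binom_pmf L psrc M"
    using binom_pmf_nonneg p by simp
  ultimately obtain s Q where s: "0 \<le> s" and Q: "is_pmf_on {0..L} Q" "t \<le> (\<Sum>M\<in>{0..L}. Q M * nu M)"
      "\<forall>M\<in>{0..L}. binom_pmf L psrc M = 0 \<longrightarrow> Q M = 0"
    and KL: "2 powr (- real n * KL2 L Q (binom_pmf L psrc))
               = (\<Sum>M\<in>{0..L}. binom_pmf L psrc M * exp (s * nu M)) ^ n * exp (- s * n * t)"
    using exists_tilted_pmf[OF _ sum_binom_pmf nu(1) mean Ms(1) _ Ms(3)] by blast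
  have "(\<Sum>w\<in>{w\<in>compositions L n. n * t < (\<Sum>M\<in>{0..L}. w M * nu M)}.
          fact n / (\<Prod>M\<in>{0..L}. fact (w M)) * (\<Prod>M\<in>{0..L}. binom_pmf L podd M ^ w M))
      \<le> exp (- s * n * t) * (\<Sum>M\<in>{0..L}. binom_pmf L podd M * exp (s * nu M)) ^ n"
    using binom_pmf_nonneg p s by (intro multinomial_tail_le) auto
  also have "\<dots> \<le> exp (- s * n * t) * (\<Sum>M\<in>{0..L}. binom_pmf L psrc M * exp (s * nu M)) ^ n"
    using p s nu binom_pmf_nonneg
    by (intro mult_left_mono power_mono sum_binom_pmf_exp_mono sum_nonneg) auto
  also have "\<dots> = 2 powr (- real n * KL2 L Q (binom_pmf L psrc))"
    unfolding KL by (rule mult.commute)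
  finally show thesis
    using that Q by blast
qed

text \<open>A negative parameter would give a negative multinomial probability to one observed histogram.\<close>

lemma binom_param_nonneg_if_multinomial:
  fixes \<Omega> :: "'a pmf" and v :: "'a \<Rightarrow> nat \<Rightarrow> nat" and p :: real and L n :: nat
  assumes L: "L \<ge> 1" and n: "n \<ge> 1"
    and multinomial: "\<forall>w :: nat \<Rightarrow> nat. (\<Sum>M\<in>{0..L}. w M) = n \<longrightarrow>
         measure_pmf.prob \<Omega> {\<omega>. \<forall>M\<in>{0..L}. v \<omega> M = w M}
           = fact n / (\<Prod>M\<in>{0..L}. fact (w M)) * (\<Prod>M\<in>{0..L}. (binom_pmf L p M) ^ (w M))"
  shows "0 \<le> p"
proof (rule ccontr)
  assume "\<not> 0 \<le> p"
  define w where "w = ((\<lambda>_ :: nat. 0 :: nat)(0 := n - 1, 1 := 1))"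
  have range: "{0..L} = insert 0 (insert 1 {2..L})"
    using L by auto
  have "(\<Sum>M\<in>{0..L}. w M) = n" "(\<Prod>M\<in>{0..L}. fact (w M) :: real) = fact (n - 1)"
    "(\<Prod>M\<in>{0..L}. binom_pmf L p M ^ w M) = binom_pmf L p 0 ^ (n - 1) * binom_pmf L p 1"
    using n by (simp_all add: range w_def)
  moreover have "0 < binom_pmf L p 0" "binom_pmf L p 1 < 0"
    using \<open>\<not> 0 \<le> p\<close> L by (simp_all add: binom_pmf_def mult_pos_neg mult_neg_pos)
  ultimately have "measure_pmf.prob \<Omega> {\<omega>. \<forall>M\<in>{0..L}. v \<omega> M = w M} < 0"
    using multinomial by (simp add: mult_pos_neg divide_neg_pos)
  then show False
    by (simp add: not_less[symmetric])
qed

lemma prob_weighted_histogram_le_multinomial_tail: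
  fixes \<Omega> :: "'a pmf" and v :: "'a \<Rightarrow> nat \<Rightarrow> nat" and p nu :: "nat \<Rightarrow> real" and c :: real
  assumes v_range: "\<forall>\<omega>\<in>set_pmf \<Omega>. (\<Sum>M\<in>{0..L}. v \<omega> M) = n"
    and multinomial: "\<forall>w :: nat \<Rightarrow> nat. (\<Sum>M\<in>{0..L}. w M) = n \<longrightarrow>
         measure_pmf.prob \<Omega> {\<omega>. \<forall>M\<in>{0..L}. v \<omega> M = w M}
           = fact n / (\<Prod>M\<in>{0..L}. fact (w M)) * (\<Prod>M\<in>{0..L}. p M ^ w M)"
  shows "measure_pmf.prob \<Omega> {\<omega>. c < (\<Sum>M\<in>{0..L}. real (v \<omega> M) * nu M)}
    \<le> (\<Sum>w\<in>{w\<in>compositions L n. c < (\<Sum>M\<in>{0..L}. w M * nu M)}.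
          fact n / (\<Prod>M\<in>{0..L}. fact (w M)) * (\<Prod>M\<in>{0..L}. p M ^ w M))"
proof -
  define h where "h \<omega> = (\<lambda>M. if M \<le> L then v \<omega> M else 0)" for \<omega>
  define V where "V = map_pmf h \<Omega>"
  define B where "B = {w :: nat \<Rightarrow> nat. c < (\<Sum>M\<in>{0..L}. real (w M) * nu M)}"
  have h_sum: "(\<Sum>M\<in>{0..L}. g M (h \<omega> M)) = (\<Sum>M\<in>{0..L}. g M (v \<omega> M))"
    for g :: "nat \<Rightarrow> nat \<Rightarrow> 'b :: comm_monoid_add" and \<omega>
    by (intro sum.cong) (auto simp: h_def)
  have set_V: "set_pmf V \<subseteq> compositions L n"
    using v_range h_sum[of "\<lambda>_ k. k"] by (auto simp: V_def compositions_def h_def)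
  have pmf_V: "pmf V w = fact n / (\<Prod>M\<in>{0..L}. fact (w M)) * (\<Prod>M\<in>{0..L}. p M ^ w M)"
    if "w \<in> compositions L n" for w
  proof -
    have "h -` {w} = {\<omega>. \<forall>M\<in>{0..L}. v \<omega> M = w M}"
      using that by (auto simp: h_def compositions_def fun_eq_iff)
    then show ?thesis
      using that multinomial by (simp add: V_def pmf_map compositions_def)
  qed
  have "measure_pmf.prob \<Omega> {\<omega>. c < (\<Sum>M\<in>{0..L}. real (v \<omega> M) * nu M)} = measure_pmf.prob V B"
    using h_sum[of "\<lambda>M k. real k * nu M"] by (simp add: V_def B_def vimage_def)
  also have "\<dots> = measure_pmf.prob V (B \<inter> set_pmf V)"
    by (simp add: measure_Int_set_pmf)
  also have "\<dots> \<le> measure_pmf.prob V (B \<inter> compositions L n)"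
    using set_V by (intro measure_pmf.finite_measure_mono) auto
  also have "\<dots> = (\<Sum>w\<in>B \<inter> compositions L n. pmf V w)"
    by (simp add: measure_measure_pmf_finite finite_compositions)
  also have "\<dots> = (\<Sum>w\<in>{w\<in>compositions L n. c < (\<Sum>M\<in>{0..L}. w M * nu M)}.
          fact n / (\<Prod>M\<in>{0..L}. fact (w M)) * (\<Prod>M\<in>{0..L}. p M ^ w M))"
    by (intro sum.cong) (auto simp: B_def pmf_V)
  finally show ?thesis .
qed

lemma prob_weighted_histogram_large_le:
  fixes \<Omega> :: "'a pmf" and v :: "'a \<Rightarrow> nat \<Rightarrow> nat" and L Nem :: nat
    and psrc \<delta>1 \<eta>1 :: real and nu :: "nat \<Rightarrow> real"
  assumes L: "L \<ge> 2" and Nem: "Nem \<ge> 1" and psrc: "0 \<le> psrc" "psrc \<le> 1"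
    and v_range: "\<forall>\<omega>\<in>set_pmf \<Omega>. (\<Sum>M\<in>{0..L}. v \<omega> M) = Nem"
    and condA: "\<exists>podd \<le> psrc. \<forall>w :: nat \<Rightarrow> nat. (\<Sum>M\<in>{0..L}. w M) = Nem \<longrightarrow>
         measure_pmf.prob \<Omega> {\<omega>. \<forall>M\<in>{0..L}. v \<omega> M = w M}
           = fact Nem / (\<Prod>M\<in>{0..L}. fact (w M))
             * (\<Prod>M\<in>{0..L}. (binom_pmf L podd M) ^ (w M))"
    and nu: "\<forall>M\<in>{0..L}. 0 \<le> nu M" "\<forall>M\<in>{0..L}. real M < real L * psrc \<longrightarrow> nu M = 0"
    and \<eta>1: "0 \<le> \<eta>1" and \<delta>1: "0 \<le> \<delta>1"
    and max1: "\<forall>Q. is_pmf_on {0..L} Q \<longrightarrow>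
         (\<Sum>M\<in>{0..L}. Q M * nu M) \<ge> (\<Sum>M\<in>{0..L}. binom_pmf L psrc M * nu M) + \<delta>1 \<longrightarrow>
         (\<forall>M\<in>{0..L}. binom_pmf L psrc M = 0 \<longrightarrow> Q M = 0) \<longrightarrow>
         2 powr (- real Nem * KL2 L Q (binom_pmf L psrc)) \<le> \<eta>1"
  shows "measure_pmf.prob \<Omega> {\<omega>. real Nem * ((\<Sum>M\<in>{0..L}. binom_pmf L psrc M * nu M) + \<delta>1)
            < (\<Sum>M\<in>{0..L}. real (v \<omega> M) * nu M)} \<le> \<eta>1"
proof -
  obtain podd where podd: "podd \<le> psrc" and multinomial: "\<forall>w :: nat \<Rightarrow> nat. (\<Sum>M\<in>{0..L}. w M) = Nem \<longrightarrow>
         measure_pmf.prob \<Omega> {\<omega>. \<forall>M\<in>{0..L}. v \<omega> M = w M}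
           = fact Nem / (\<Prod>M\<in>{0..L}. fact (w M)) * (\<Prod>M\<in>{0..L}. (binom_pmf L podd M) ^ (w M))"
    using condA by blast
  have "0 \<le> podd"
    using binom_param_nonneg_if_multinomial[OF _ Nem multinomial] L by simp
  then have bo_nonneg: "0 \<le> binom_pmf L podd M" for M
    using binom_pmf_nonneg podd psrc by simp
  define t where "t = (\<Sum>M\<in>{0..L}. binom_pmf L psrc M * nu M) + \<delta>1"
  define tail where "tail = (\<Sum>w\<in>{w\<in>compositions L Nem. Nem * t < (\<Sum>M\<in>{0..L}. w M * nu M)}.
          fact Nem / (\<Prod>M\<in>{0..L}. fact (w M)) * (\<Prod>M\<in>{0..L}. binom_pmf L podd M ^ w M))"
  have "measure_pmf.prob \<Omega> {\<omega>. real Nem * t < (\<Sum>M\<in>{0..L}. real (v \<omega> M) * nu M)} \<le> tail"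
    unfolding tail_def by (rule prob_weighted_histogram_le_multinomial_tail[OF v_range multinomial])
  also have "tail \<le> \<eta>1"
  proof (cases "\<exists>Ms\<in>{0..L}. 0 < binom_pmf L podd Ms \<and> t < nu Ms")
    case True
    moreover have "(\<Sum>M\<in>{0..L}. binom_pmf L psrc M * nu M) \<le> t"
      using \<delta>1 by (simp add: t_def)
    ultimately obtain Q where Q: "is_pmf_on {0..L} Q" "t \<le> (\<Sum>M\<in>{0..L}. Q M * nu M)"
        "\<forall>M\<in>{0..L}. binom_pmf L psrc M = 0 \<longrightarrow> Q M = 0"
      and "tail \<le> 2 powr (- real Nem * KL2 L Q (binom_pmf L psrc))"
      unfolding tail_def using multinomial_tail_le_divergence[OF \<open>0 \<le> podd\<close> podd psrc(2) nu] by blast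
    moreover have "2 powr (- real Nem * KL2 L Q (binom_pmf L psrc)) \<le> \<eta>1"
      using max1 Q(1,3) Q(2)[unfolded t_def] by blast
    ultimately show ?thesis
      by linarith
  next
    case False
    then have "tail = 0"
      unfolding tail_def using bo_nonneg by (intro multinomial_tail_eq_0) (meson less_eq_real_def not_less)
    then show ?thesis
      using \<eta>1 by simp
  qed
  finally show ?thesis
    unfolding t_def .
qed

section \<open>Deviation of the conditional type\<close>

lemma list_type_zip3_in_Pset2_iff:
  assumes len: "length ms = n" "length us = n" "length xs = n" and n: "n \<ge> 1"
    and W: "set (zip ms (zip us xs)) \<subseteq> W_set L"
  shows "list_type (zip ms (zip us xs)) \<in> Pset2 L xi \<delta> \<longleftrightarrow>
    (\<Sum>k<n. (real (xs ! k) - cMU L (ms ! k) (us ! k)) * xi (ms ! k) (us ! k))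
      \<le> n * (\<delta> / 3 + sqrt ((\<delta> / 3)\<^sup>2 + 2 * \<delta> *
              ((\<Sum>k<n. cMU L (ms ! k) (us ! k) * (1 - cMU L (ms ! k) (us ! k)) * (xi (ms ! k) (us ! k))\<^sup>2) / n)))"
proof -
  have "zip ms (zip us xs) \<noteq> []"
    using len n by (metis length_zip min.idem list.size(3) not_one_le_zero)
  then show ?thesis
    using list_type_in_Pset2_iff[OF _ W] len n by (simp add: sum_list_zip3 pos_divide_le_eq mult.commute)
qed

lemma bernoulli_prob_type_outside_Pset2_le:
  fixes ms us :: "nat list" and xi :: "nat \<Rightarrow> nat \<Rightarrow> real" and \<delta> :: real
  assumes L: "L \<ge> 2" and n: "n \<ge> 1" and len: "length ms = n" "length us = n" and \<delta>: "0 \<le> \<delta>"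
    and xi: "\<forall>M\<in>{0..L}. \<forall>U\<in>{0..1}. 0 \<le> cMU L M U \<and> cMU L M U \<le> 1 \<longrightarrow> \<bar>xi M U\<bar> \<le> 1"
  shows "(\<Sum>xs\<in>{xs\<in>binary_words n. set (zip ms (zip us xs)) \<subseteq> W_set L \<and>
                                 list_type (zip ms (zip us xs)) \<notin> Pset2 L xi \<delta>}.
            \<Prod>k<n. bernoulli_weight (cMU L (ms ! k) (us ! k)) (xs ! k)) \<le> exp (- real n * \<delta>)"
    (is "(\<Sum>xs\<in>?bad. ?p xs) \<le> _")
proof (cases "?bad = {}")
  case False
  define c where "c k = cMU L (ms ! k) (us ! k)" for k
  define \<xi> where "\<xi> k = xi (ms ! k) (us ! k)" for k
  obtain xs0 where "xs0 \<in> ?bad"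
    using False by blast
  then have W: "(ms ! k, us ! k, xs0 ! k) \<in> W_set L" if "k < n" for k
    using len that set_zip3_subset_iff[of ms n us xs0] by (auto simp: binary_words_def)
  have c\<xi>: "\<forall>k<n. 0 \<le> c k \<and> c k \<le> 1 \<and> \<bar>\<xi> k\<bar> \<le> 1"
  proof (intro allI impI)
    fix k assume "k < n"
    then have "0 \<le> c k" "c k \<le> 1" "ms ! k \<in> {0..L}" "us ! k \<in> {0..1}"
      using cMU_bounds[OF L W] W by (auto simp: c_def W_set_def)
    then show "0 \<le> c k \<and> c k \<le> 1 \<and> \<bar>\<xi> k\<bar> \<le> 1"
      using xi by (simp add: c_def \<xi>_def)
  qed
  have "?bad \<subseteq> {xs\<in>binary_words n. n * (\<delta> / 3 + sqrt ((\<delta> / 3)\<^sup>2 + 2 * \<delta> * ((\<Sum>k<n. c k * (1 - c k) * (\<xi> k)\<^sup>2) / n)))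
                                   < (\<Sum>k<n. (real (xs ! k) - c k) * \<xi> k)}"
    using list_type_zip3_in_Pset2_iff[OF len _ n] by (auto simp: binary_words_def c_def \<xi>_def not_le)
  moreover have "0 \<le> ?p xs" for xs
    using c\<xi> by (intro prod_nonneg) (simp add: bernoulli_weight_def c_def)
  ultimately have "(\<Sum>xs\<in>?bad. ?p xs)
      \<le> (\<Sum>xs\<in>{xs\<in>binary_words n. n * (\<delta> / 3 + sqrt ((\<delta> / 3)\<^sup>2 + 2 * \<delta> * ((\<Sum>k<n. c k * (1 - c k) * (\<xi> k)\<^sup>2) / n)))
                                   < (\<Sum>k<n. (real (xs ! k) - c k) * \<xi> k)}. ?p xs)"
    by (intro sum_mono2) (auto intro: finite_subset[OF _ finite_binary_words])
  also have "\<dots> \<le> exp (- real n * \<delta>)"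
    using bernoulli_Bernstein_tail[OF c\<xi> \<delta>] by (simp add: c_def)
  finally show ?thesis .
next
  case True
  then have "(\<Sum>xs\<in>?bad. ?p xs) = 0"
    by (simp only: sum.empty)
  then show ?thesis
    by simp
qed

lemma prob_le_if_fibrewise_le:
  fixes \<Omega> :: "'a pmf" and f :: "'a \<Rightarrow> 't" and \<eta> :: real
  assumes "0 \<le> \<eta>"
    and fibre: "\<And>t. t \<in> f ` set_pmf \<Omega> \<Longrightarrow>
       measure_pmf.prob \<Omega> (A \<inter> {\<omega>. f \<omega> = t}) \<le> \<eta> * measure_pmf.prob \<Omega> {\<omega>. f \<omega> = t}"
  shows "measure_pmf.prob \<Omega> A \<le> \<eta>"
proof -
  define F where "F = map_pmf f \<Omega>"
  define K where "K t = cond_pmf \<Omega> {\<omega>. f \<omega> = t}" for t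
  have ne: "set_pmf \<Omega> \<inter> {\<omega>. f \<omega> = t} \<noteq> {}" if "t \<in> set_pmf F" for t
    using that by (auto simp: F_def)
  have bind: "bind_pmf F K = \<Omega>"
    unfolding K_def F_def by (rule bind_cond_pmf_cancel) (auto simp: vimage_def eq_commute)
  have "emeasure (measure_pmf (K t)) A \<le> ennreal \<eta>" if t: "t \<in> set_pmf F" for t
  proof -
    have pos: "0 < measure_pmf.prob \<Omega> {\<omega>. f \<omega> = t}"
      using ne[OF t] by (auto intro: measure_pmf_posI)
    have "emeasure (measure_pmf (K t)) A
        = emeasure (measure_pmf \<Omega>) (A \<inter> {\<omega>. f \<omega> = t}) / emeasure (measure_pmf \<Omega>) {\<omega>. f \<omega> = t}"
      unfolding K_def cond_pmf.rep_eq[OF ne[OF t]] by (simp add: Int_commute)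
    also have "\<dots> = ennreal (measure_pmf.prob \<Omega> (A \<inter> {\<omega>. f \<omega> = t}) / measure_pmf.prob \<Omega> {\<omega>. f \<omega> = t})"
      using pos by (simp add: measure_pmf.emeasure_eq_measure divide_ennreal)
    also have "\<dots> \<le> ennreal \<eta>"
      using fibre[of t] t pos by (intro ennreal_leI) (simp add: divide_le_eq F_def)
    finally show ?thesis .
  qed
  then have "(\<integral>\<^sup>+t. emeasure (measure_pmf (K t)) A \<partial>measure_pmf F) \<le> (\<integral>\<^sup>+t. ennreal \<eta> \<partial>measure_pmf F)"
    by (intro nn_integral_mono_AE) (simp add: AE_measure_pmf_iff)
  then have "emeasure (measure_pmf \<Omega>) A \<le> ennreal \<eta>"
    unfolding bind[symmetric] by simp
  then show ?thesis
    using assms(1) by (simp add: measure_pmf.emeasure_eq_measure)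
qed

lemma prob_fibre_type_outside_Pset2_le:
  fixes \<Omega> :: "'a pmf" and NN :: "'a \<Rightarrow> nat" and m u x :: "'a \<Rightarrow> nat list"
    and xi :: "nat \<Rightarrow> nat \<Rightarrow> real" and \<delta> :: real and L n :: nat and ms us :: "nat list"
  assumes L: "L \<ge> 2" and n: "n \<ge> 1" and len: "length ms = n" "length us = n" and \<delta>: "0 \<le> \<delta>"
    and seq_range: "\<forall>\<omega>\<in>set_pmf \<Omega>. NN \<omega> \<ge> 1 \<longrightarrow>
         length (m \<omega>) = NN \<omega> \<and> length (u \<omega>) = NN \<omega> \<and> length (x \<omega>) = NN \<omega> \<and>
         (\<forall>k < NN \<omega>. (m \<omega> ! k, u \<omega> ! k, x \<omega> ! k) \<in> W_set L)"
    and condC: "\<forall>n \<ge> 1. \<forall>ms us xs. length xs = n \<longrightarrow> set xs \<subseteq> {0, 1} \<longrightarrow>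
         measure_pmf.prob \<Omega> {\<omega>. NN \<omega> = n \<and> m \<omega> = ms \<and> u \<omega> = us \<and> x \<omega> = xs}
           = measure_pmf.prob \<Omega> {\<omega>. NN \<omega> = n \<and> m \<omega> = ms \<and> u \<omega> = us}
             * (\<Prod>k<n. (cMU L (ms ! k) (us ! k)) ^ (xs ! k)
                        * (1 - cMU L (ms ! k) (us ! k)) ^ (1 - xs ! k))"
    and xi: "\<forall>M\<in>{0..L}. \<forall>U\<in>{0..1}. 0 \<le> cMU L M U \<and> cMU L M U \<le> 1 \<longrightarrow> \<bar>xi M U\<bar> \<le> 1"
  shows "measure_pmf.prob \<Omega> {\<omega>. NN \<omega> = n \<and> m \<omega> = ms \<and> u \<omega> = us \<and>
                                  list_type (zip (m \<omega>) (zip (u \<omega>) (x \<omega>))) \<notin> Pset2 L xi \<delta>}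
           \<le> exp (- real n * \<delta>) * measure_pmf.prob \<Omega> {\<omega>. NN \<omega> = n \<and> m \<omega> = ms \<and> u \<omega> = us}"
    (is "measure_pmf.prob \<Omega> ?E \<le> _ * ?P")
proof -
  define bad where "bad = {xs\<in>binary_words n. set (zip ms (zip us xs)) \<subseteq> W_set L \<and>
                                list_type (zip ms (zip us xs)) \<notin> Pset2 L xi \<delta>}"
  define X where "X xs = {\<omega>. NN \<omega> = n \<and> m \<omega> = ms \<and> u \<omega> = us \<and> x \<omega> = xs}" for xs
  have "?E \<inter> set_pmf \<Omega> \<subseteq> (\<Union>xs\<in>bad. X xs)"
  proof
    fix \<omega> assume \<omega>: "\<omega> \<in> ?E \<inter> set_pmf \<Omega>"
    then have "length (x \<omega>) = n \<and> (\<forall>k<n. (ms ! k, us ! k, x \<omega> ! k) \<in> W_set L)"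
      using seq_range n by auto
    then have "length (x \<omega>) = n" and W: "set (zip ms (zip us (x \<omega>))) \<subseteq> W_set L"
      using len by (simp_all add: set_zip3_subset_iff)
    then have "x \<omega> \<in> binary_words n"
      using map_snd_snd_in_binary_words[OF W] len by (simp add: map_snd_snd_zip3)
    then show "\<omega> \<in> (\<Union>xs\<in>bad. X xs)"
      using \<omega> W by (auto simp: bad_def X_def)
  qed
  have "finite bad"
    by (rule finite_subset[OF _ finite_binary_words]) (auto simp: bad_def)
  have "measure_pmf.prob \<Omega> ?E = measure_pmf.prob \<Omega> (?E \<inter> set_pmf \<Omega>)"
    by (simp add: measure_Int_set_pmf)
  also have "\<dots> \<le> measure_pmf.prob \<Omega> (\<Union>xs\<in>bad. X xs)"
    using \<open>?E \<inter> set_pmf \<Omega> \<subseteq> _\<close> by (intro measure_pmf.finite_measure_mono) auto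
  also have "\<dots> \<le> (\<Sum>xs\<in>bad. measure_pmf.prob \<Omega> (X xs))"
    using \<open>finite bad\<close> by (intro measure_pmf.finite_measure_subadditive_finite) auto
  also have "\<dots> = ?P * (\<Sum>xs\<in>bad. \<Prod>k<n. bernoulli_weight (cMU L (ms ! k) (us ! k)) (xs ! k))"
    using condC n
    by (simp add: X_def bad_def binary_words_def bernoulli_weight_def sum_distrib_left)
  also have "\<dots> \<le> ?P * exp (- real n * \<delta>)"
    using bernoulli_prob_type_outside_Pset2_le[OF L n len \<delta> xi]
    by (intro mult_left_mono) (simp_all add: bad_def)
  finally show ?thesis
    by (simp add: mult.commute)
qed

lemma prob_type_outside_Pset2_le:
  fixes \<Omega> :: "'a pmf" and NN :: "'a \<Rightarrow> nat" and m u x :: "'a \<Rightarrow> nat list"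
    and xi :: "nat \<Rightarrow> nat \<Rightarrow> real" and \<delta>2 :: "nat \<Rightarrow> real" and \<eta>2 :: real and L :: nat
  assumes L: "L \<ge> 2"
    and seq_range: "\<forall>\<omega>\<in>set_pmf \<Omega>. NN \<omega> \<ge> 1 \<longrightarrow>
         length (m \<omega>) = NN \<omega> \<and> length (u \<omega>) = NN \<omega> \<and> length (x \<omega>) = NN \<omega> \<and>
         (\<forall>k < NN \<omega>. (m \<omega> ! k, u \<omega> ! k, x \<omega> ! k) \<in> W_set L)"
    and condC: "\<forall>n \<ge> 1. \<forall>ms us xs. length xs = n \<longrightarrow> set xs \<subseteq> {0, 1} \<longrightarrow>
         measure_pmf.prob \<Omega> {\<omega>. NN \<omega> = n \<and> m \<omega> = ms \<and> u \<omega> = us \<and> x \<omega> = xs}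
           = measure_pmf.prob \<Omega> {\<omega>. NN \<omega> = n \<and> m \<omega> = ms \<and> u \<omega> = us}
             * (\<Prod>k<n. (cMU L (ms ! k) (us ! k)) ^ (xs ! k)
                        * (1 - cMU L (ms ! k) (us ! k)) ^ (1 - xs ! k))"
    and xi: "\<forall>M\<in>{0..L}. \<forall>U\<in>{0..1}. 0 \<le> cMU L M U \<and> cMU L M U \<le> 1 \<longrightarrow> \<bar>xi M U\<bar> \<le> 1"
    and \<eta>2: "0 \<le> \<eta>2" and \<delta>2: "\<forall>N. 0 \<le> \<delta>2 N" and max2: "\<forall>N \<ge> 1. exp (- real N * \<delta>2 N) \<le> \<eta>2"
  shows "measure_pmf.prob \<Omega>
           {\<omega>. 1 \<le> NN \<omega> \<and> list_type (zip (m \<omega>) (zip (u \<omega>) (x \<omega>))) \<notin> Pset2 L xi (\<delta>2 (NN \<omega>))} \<le> \<eta>2"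
    (is "measure_pmf.prob \<Omega> ?E \<le> _")
proof (rule prob_le_if_fibrewise_le[OF \<eta>2, where f = "\<lambda>\<omega>. (NN \<omega>, m \<omega>, u \<omega>)"])
  fix t assume "t \<in> (\<lambda>\<omega>. (NN \<omega>, m \<omega>, u \<omega>)) ` set_pmf \<Omega>"
  then obtain \<omega> where \<omega>: "\<omega> \<in> set_pmf \<Omega>" "t = (NN \<omega>, m \<omega>, u \<omega>)"
    by blast
  define n where "n = NN \<omega>"
  have fibre: "{\<omega>'. (NN \<omega>', m \<omega>', u \<omega>') = t} = {\<omega>'. NN \<omega>' = n \<and> m \<omega>' = m \<omega> \<and> u \<omega>' = u \<omega>}"
    using \<omega> by (auto simp: n_def)
  show "measure_pmf.prob \<Omega> (?E \<inter> {\<omega>'. (NN \<omega>', m \<omega>', u \<omega>') = t})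
      \<le> \<eta>2 * measure_pmf.prob \<Omega> {\<omega>'. (NN \<omega>', m \<omega>', u \<omega>') = t}"
  proof (cases "1 \<le> n")
    case True
    have "length (m \<omega>) = n" "length (u \<omega>) = n"
      using seq_range \<omega> True by (auto simp: n_def)
    from prob_fibre_type_outside_Pset2_le[OF L True this _ seq_range condC xi, of "\<delta>2 n"] \<delta>2
    have "measure_pmf.prob \<Omega> (?E \<inter> {\<omega>'. (NN \<omega>', m \<omega>', u \<omega>') = t})
        \<le> exp (- real n * \<delta>2 n) * measure_pmf.prob \<Omega> {\<omega>'. (NN \<omega>', m \<omega>', u \<omega>') = t}"
      unfolding fibre using True by (simp add: Int_def conj_ac cong: conj_cong)
    also have "\<dots> \<le> \<eta>2 * measure_pmf.prob \<Omega> {\<omega>'. (NN \<omega>', m \<omega>', u \<omega>') = t}"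
      using max2 True by (intro mult_right_mono) auto
    finally show ?thesis .
  next
    case False
    then have "?E \<inter> {\<omega>'. (NN \<omega>', m \<omega>', u \<omega>') = t} = {}"
      unfolding fibre by auto
    then show ?thesis
      using \<eta>2 by simp
  qed
qed

section \<open>The error event\<close>

lemma occ_eq_count_list: "occ ms M = count_list ms M"
  by (induction ms) (auto simp: occ_def)

lemma weighted_histogram_large_if_type_outside_Pset1:
  fixes ws :: "(nat \<times> nat \<times> nat) list" and v :: "nat \<Rightarrow> nat"
  assumes ws: "ws \<noteq> []" "set ws \<subseteq> W_set L" and outside: "list_type ws \<notin> Pset1 L Nem psrc (length ws) nu \<delta>1"
    and nu: "\<forall>M\<in>{0..L}. 0 \<le> nu M" and v: "\<forall>M\<in>{0..L}. count_list (map fst ws) M \<le> v M"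
  shows "real Nem * ((\<Sum>M\<in>{0..L}. binom_pmf L psrc M * nu M) + \<delta>1) < (\<Sum>M\<in>{0..L}. real (v M) * nu M)"
proof -
  have "set (map fst ws) \<subseteq> {0..L}"
    using ws(2) by (auto simp: W_set_def)
  then have "(\<Sum>w\<leftarrow>ws. nu (fst w)) = (\<Sum>M\<in>{0..L}. real (count_list (map fst ws) M) * nu M)"
    using sum_list_map_eq_sum_count_list[of "map fst ws" "{0..L}" nu] by (simp add: comp_def)
  also have "\<dots> \<le> (\<Sum>M\<in>{0..L}. real (v M) * nu M)"
    using nu v by (intro sum_mono mult_right_mono) auto
  finally have "(\<Sum>w\<leftarrow>ws. nu (fst w)) \<le> (\<Sum>M\<in>{0..L}. real (v M) * nu M)" .
  moreover have "real Nem * ((\<Sum>M\<in>{0..L}. binom_pmf L psrc M * nu M) + \<delta>1) < (\<Sum>w\<leftarrow>ws. nu (fst w))"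
    using outside list_type_in_Pset1_iff[OF ws] ws(1) by (simp add: not_le divide_less_cancel)
  ultimately show ?thesis
    by linarith
qed

lemma large_histogram_or_outside_Pset2_if_not_typical:
  fixes ms us xs :: "nat list" and v :: "nat \<Rightarrow> nat"
  assumes N: "N \<ge> 1" and len: "length ms = N" "length us = N" "length xs = N"
    and W: "\<forall>k<N. (ms ! k, us ! k, xs ! k) \<in> W_set L"
    and nu: "\<forall>M\<in>{0..L}. 0 \<le> nu M" and v: "\<forall>M\<in>{0..L}. occ ms M \<le> v M"
    and not_typical: "xs \<notin> typical_set L (Pset1 L Nem psrc N nu \<delta>1 \<inter> Pset2 L xi \<delta>) N (yseq ms us xs)"
  shows "real Nem * ((\<Sum>M\<in>{0..L}. binom_pmf L psrc M * nu M) + \<delta>1) < (\<Sum>M\<in>{0..L}. real (v M) * nu M)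
         \<or> list_type (zip ms (zip us xs)) \<notin> Pset2 L xi \<delta>"
proof -
  define ws where "ws = zip ms (zip us xs)"
  have ws: "length ws = N" "set ws \<subseteq> W_set L" "map fst ws = ms"
    using len W by (simp_all add: ws_def set_zip3_subset_iff)
  then have "list_type ws \<notin> Pset1 L Nem psrc N nu \<delta>1 \<inter> Pset2 L xi \<delta>"
    using not_typical len by (auto simp: typical_set_def yseq_def ws_def map_snd_snd_zip3)
  moreover have "ws \<noteq> []"
    using ws(1) N by auto
  ultimately show ?thesis
    using weighted_histogram_large_if_type_outside_Pset1[of ws L Nem psrc nu \<delta>1 v] ws nu v
    by (auto simp: ws_def occ_eq_count_list)
qed

lemma not_typical_subset:
  fixes \<Omega> :: "'a pmf" and v :: "'a \<Rightarrow> nat \<Rightarrow> nat" and NN :: "'a \<Rightarrow> nat" and m u x :: "'a \<Rightarrow> nat list"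
    and nu :: "nat \<Rightarrow> real" and \<delta>2 :: "nat \<Rightarrow> real"
  assumes seq_range: "\<forall>\<omega>\<in>set_pmf \<Omega>. NN \<omega> \<ge> 1 \<longrightarrow>
         length (m \<omega>) = NN \<omega> \<and> length (u \<omega>) = NN \<omega> \<and> length (x \<omega>) = NN \<omega> \<and>
         (\<forall>k < NN \<omega>. (m \<omega> ! k, u \<omega> ! k, x \<omega> ! k) \<in> W_set L)"
    and condB: "\<forall>M\<in>{0..L}. \<forall>\<omega>\<in>set_pmf \<Omega>. NN \<omega> \<ge> 1 \<longrightarrow> occ (m \<omega>) M \<le> v \<omega> M"
    and nu: "\<forall>M\<in>{0..L}. 0 \<le> nu M"
  shows "{\<omega>. NN \<omega> \<ge> 1 \<and> x \<omega> \<notin> typical_set L (Pset1 L Nem psrc (NN \<omega>) nu \<delta>1 \<inter> Pset2 L xi (\<delta>2 (NN \<omega>)))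
                                  (NN \<omega>) (yseq (m \<omega>) (u \<omega>) (x \<omega>))} \<inter> set_pmf \<Omega>
    \<subseteq> {\<omega>. real Nem * ((\<Sum>M\<in>{0..L}. binom_pmf L psrc M * nu M) + \<delta>1) < (\<Sum>M\<in>{0..L}. real (v \<omega> M) * nu M)}
      \<union> {\<omega>. 1 \<le> NN \<omega> \<and> list_type (zip (m \<omega>) (zip (u \<omega>) (x \<omega>))) \<notin> Pset2 L xi (\<delta>2 (NN \<omega>))}"
proof
  fix \<omega> assume "\<omega> \<in> {\<omega>. NN \<omega> \<ge> 1 \<and> x \<omega> \<notin> typical_set L (Pset1 L Nem psrc (NN \<omega>) nu \<delta>1 \<inter> Pset2 L xi (\<delta>2 (NN \<omega>)))
                                  (NN \<omega>) (yseq (m \<omega>) (u \<omega>) (x \<omega>))} \<inter> set_pmf \<Omega>"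
  then have N: "NN \<omega> \<ge> 1" and \<omega>: "\<omega> \<in> set_pmf \<Omega>"
    and not_typical: "x \<omega> \<notin> typical_set L (Pset1 L Nem psrc (NN \<omega>) nu \<delta>1 \<inter> Pset2 L xi (\<delta>2 (NN \<omega>)))
                                  (NN \<omega>) (yseq (m \<omega>) (u \<omega>) (x \<omega>))"
    by auto
  have "length (m \<omega>) = NN \<omega>" "length (u \<omega>) = NN \<omega>" "length (x \<omega>) = NN \<omega>"
    "\<forall>k < NN \<omega>. (m \<omega> ! k, u \<omega> ! k, x \<omega> ! k) \<in> W_set L"
    using seq_range \<omega> N by blast+
  moreover have "\<forall>M\<in>{0..L}. occ (m \<omega>) M \<le> v \<omega> M"
    using condB \<omega> N by blast
  ultimately show "\<omega> \<in> {\<omega>. real Nem * ((\<Sum>M\<in>{0..L}. binom_pmf L psrc M * nu M) + \<delta>1) < (\<Sum>M\<in>{0..L}. real (v \<omega> M) * nu M)}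
      \<union> {\<omega>. 1 \<le> NN \<omega> \<and> list_type (zip (m \<omega>) (zip (u \<omega>) (x \<omega>))) \<notin> Pset2 L xi (\<delta>2 (NN \<omega>))}"
    using large_histogram_or_outside_Pset2_if_not_typical[OF N _ _ _ _ nu _ not_typical] N by simp
qed

lemma prob_le_add_if_subset_Un:
  assumes "A \<inter> set_pmf \<Omega> \<subseteq> B \<union> C"
  shows "measure_pmf.prob \<Omega> A \<le> measure_pmf.prob \<Omega> B + measure_pmf.prob \<Omega> C"
proof -
  have "measure_pmf.prob \<Omega> A = measure_pmf.prob \<Omega> (A \<inter> set_pmf \<Omega>)"
    by (simp add: measure_Int_set_pmf)
  also have "\<dots> \<le> measure_pmf.prob \<Omega> (B \<union> C)"
    using assms by (intro measure_pmf.finite_measure_mono) auto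
  also have "\<dots> \<le> measure_pmf.prob \<Omega> B + measure_pmf.prob \<Omega> C"
    by (rule measure_Un_le) auto
  finally show ?thesis .
qed

theorem theorem1:
  fixes L Nem :: nat and psrc :: real
    and \<Omega> :: "'a pmf"
    and v :: "'a \<Rightarrow> nat \<Rightarrow> nat" and NN :: "'a \<Rightarrow> nat"
    and m u x :: "'a \<Rightarrow> nat list"
    and nu :: "nat \<Rightarrow> real" and xi :: "nat \<Rightarrow> nat \<Rightarrow> real"
    and \<eta>1 \<delta>1 \<eta>2 :: real and \<delta>2 :: "nat \<Rightarrow> real" and HPA :: "nat \<Rightarrow> real"
  assumes hL: "L \<ge> 2" and hNem: "Nem \<ge> 1" and hp: "0 \<le> psrc" "psrc \<le> 1"
    \<comment> \<open>ranges of the random variables\<close>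
    and v_range: "\<forall>\<omega>\<in>set_pmf \<Omega>. (\<Sum>M\<in>{0..L}. v \<omega> M) = Nem"
    and seq_range: "\<forall>\<omega>\<in>set_pmf \<Omega>. NN \<omega> \<ge> 1 \<longrightarrow>
         length (m \<omega>) = NN \<omega> \<and> length (u \<omega>) = NN \<omega> \<and> length (x \<omega>) = NN \<omega> \<and>
         (\<forall>k < NN \<omega>. (m \<omega> ! k, u \<omega> ! k, x \<omega> ! k) \<in> W_set L)"
    \<comment> \<open>(A)\<close>
    and condA: "\<exists>podd \<le> psrc. \<forall>w :: nat \<Rightarrow> nat. (\<Sum>M\<in>{0..L}. w M) = Nem \<longrightarrow>
         measure_pmf.prob \<Omega> {\<omega>. \<forall>M\<in>{0..L}. v \<omega> M = w M}
           = fact Nem / (\<Prod>M\<in>{0..L}. fact (w M))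
             * (\<Prod>M\<in>{0..L}. (binom_pmf L podd M) ^ (w M))"
    \<comment> \<open>(B)\<close>
    and condB: "\<forall>M\<in>{0..L}. \<forall>\<omega>\<in>set_pmf \<Omega>. NN \<omega> \<ge> 1 \<longrightarrow> occ (m \<omega>) M \<le> v \<omega> M"
    \<comment> \<open>(C)\<close>
    and condC: "\<forall>n \<ge> 1. \<forall>ms us xs. length xs = n \<longrightarrow> set xs \<subseteq> {0, 1} \<longrightarrow>
         measure_pmf.prob \<Omega> {\<omega>. NN \<omega> = n \<and> m \<omega> = ms \<and> u \<omega> = us \<and> x \<omega> = xs}
           = measure_pmf.prob \<Omega> {\<omega>. NN \<omega> = n \<and> m \<omega> = ms \<and> u \<omega> = us}
             * (\<Prod>k<n. (cMU L (ms ! k) (us ! k)) ^ (xs ! k)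
                        * (1 - cMU L (ms ! k) (us ! k)) ^ (1 - xs ! k))"
    \<comment> \<open>nu\<close>
    and nu_nonneg: "\<forall>M\<in>{0..L}. 0 \<le> nu M"
    and nu_zero: "\<forall>M\<in>{0..L}. real M < real L * psrc \<longrightarrow> nu M = 0"
    \<comment> \<open>xi\<close>
    and xi_bound: "\<forall>M\<in>{0..L}. \<forall>U\<in>{0..1}. 0 \<le> cMU L M U \<and> cMU L M U \<le> 1 \<longrightarrow> \<bar>xi M U\<bar> \<le> 1"
    \<comment> \<open>eta1, delta1\<close>
    and h\<eta>1: "0 \<le> \<eta>1" and h\<delta>1: "0 \<le> \<delta>1"
    and max1: "\<forall>Q. is_pmf_on {0..L} Q \<longrightarrow>
         (\<Sum>M\<in>{0..L}. Q M * nu M) \<ge> (\<Sum>M\<in>{0..L}. binom_pmf L psrc M * nu M) + \<delta>1 \<longrightarrow>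
         (\<forall>M\<in>{0..L}. binom_pmf L psrc M = 0 \<longrightarrow> Q M = 0) \<longrightarrow>
         2 powr (- real Nem * KL2 L Q (binom_pmf L psrc)) \<le> \<eta>1"
    \<comment> \<open>eta2, delta2\<close>
    and h\<eta>2: "0 \<le> \<eta>2" and h\<delta>2: "\<forall>N. 0 \<le> \<delta>2 N"
    and max2: "\<forall>N \<ge> 1. exp (- real N * \<delta>2 N) \<le> \<eta>2"
    \<comment> \<open>H_PA\<close>
    and hHPA: "\<forall>N \<ge> 1. \<forall>P \<in> Pset1 L Nem psrc N nu \<delta>1 \<inter> Pset2 L xi (\<delta>2 N).
         cond_entropy_XY L P \<le> HPA N"
  shows "\<exists>T :: nat \<Rightarrow> (nat \<times> nat) list \<Rightarrow> nat list set.
           (\<forall>N \<ge> 1. \<forall>ys. length ys = N \<and> set ys \<subseteq> Y_set L \<longrightarrow>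
               T N ys \<subseteq> {xs. length xs = N \<and> set xs \<subseteq> {0, 1}} \<and>
               (T N ys = {} \<or> log 2 (real (card (T N ys))) \<le> real N * HPA N)) \<and>
           measure_pmf.prob \<Omega>
             {\<omega>. NN \<omega> \<ge> 1 \<and> x \<omega> \<notin> T (NN \<omega>) (yseq (m \<omega>) (u \<omega>) (x \<omega>))}
             \<le> \<eta>1 + \<eta>2"
proof -
  define T where "T N ys = typical_set L (Pset1 L Nem psrc N nu \<delta>1 \<inter> Pset2 L xi (\<delta>2 N)) N ys" for N ys
  have "T N ys \<subseteq> {xs. length xs = N \<and> set xs \<subseteq> {0, 1}} \<and>
        (T N ys = {} \<or> log 2 (real (card (T N ys))) \<le> real N * HPA N)" if N: "N \<ge> 1" for N ys
  proof
    show "T N ys \<subseteq> {xs. length xs = N \<and> set xs \<subseteq> {0, 1}}"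
      using typical_set_subset_binary_words by (simp add: T_def binary_words_def)
    have mixture: "uniform_mixture I P \<in> Pset1 L Nem psrc N nu \<delta>1 \<inter> Pset2 L xi (\<delta>2 N)"
      if I: "finite I" "I \<noteq> {}" and P: "\<forall>i\<in>I. P i \<in> Pset1 L Nem psrc N nu \<delta>1 \<inter> Pset2 L xi (\<delta>2 N)"
      for I :: "nat list set" and P
      using uniform_mixture_in_Pset1[OF I] uniform_mixture_in_Pset2[OF hL I _ h\<delta>2[rule_format]] P
      by simp
    have "\<forall>P\<in>Pset1 L Nem psrc N nu \<delta>1 \<inter> Pset2 L xi (\<delta>2 N). cond_entropy_XY L P \<le> HPA N"
      using hHPA N by simp
    then have "T N ys \<noteq> {} \<Longrightarrow> log 2 (real (card (T N ys))) \<le> real N * HPA N"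
      unfolding T_def using log_card_typical_set_le[OF _ mixture] by blast
    then show "T N ys = {} \<or> log 2 (real (card (T N ys))) \<le> real N * HPA N"
      by blast
  qed
  moreover have "measure_pmf.prob \<Omega> {\<omega>. NN \<omega> \<ge> 1 \<and> x \<omega> \<notin> T (NN \<omega>) (yseq (m \<omega>) (u \<omega>) (x \<omega>))}
      \<le> \<eta>1 + \<eta>2"
    unfolding T_def
    by (rule order_trans[OF prob_le_add_if_subset_Un[OF not_typical_subset[OF seq_range condB nu_nonneg]]
          add_mono[OF prob_weighted_histogram_large_le[OF hL hNem hp v_range condA nu_nonneg nu_zero h\<eta>1 h\<delta>1 max1]
                      prob_type_outside_Pset2_le[OF hL seq_range condC xi_bound h\<eta>2 h\<delta>2 max2]]])
  ultimately show ?thesis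
    by blast
qed

end
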